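(* For every $n$-qubit density operator $\rho$, $$\Gamma(\rho)\ \ge\ 1+\frac{C(\rho)}{M_n}.$$ Consequently $\Gamma(\rho)^2\ge\bigl(1+C(\rho)/M_n\bigr)^2$.
   Context: Let $I,X,Y,Z$ be the Pauli matrices. For $(q,p)\in\mathbb{F}_2^2$ define the single-qubit phase-point operator $A_{(q,p)}=\tfrac12\bigl(I+(-1)^pX+(-1)^{q+p}Y+(-1)^qZ\bigr)$. For $n$ qubits and $\alpha=(\alpha_1,\dots,\alpha_n)\in(\mathbb{F}_2^2)^n$ set $A_\alpha=A_{\alpha_1}\otimes\cdots\otimes A_{\alpha_n}$. The discrete Wigner function of an $n$-qubit operator $\rho$ is $W_\rho(\alpha)=2^{-n}\mathrm{Tr}(\rho A_\alpha)$, regarded as a vector in $\mathbb{R}^{4^n}$. $\mathrm{Stab}_n$ denotes the set of pure $n$-qubit stabilizer states, i.e. density operators $|\psi\rangle\langle\psi|$ with $|\psi\rangle$ the unique common $+1$ eigenvector of an abelian subgroup of the $n$-qubit Pauli group of size $2^n$ (not containing $-I$). The free Wigner polytope is $\mathcal{W}_{\mathrm{free}}=\mathrm{conv}\{W_\sigma:\sigma\in\mathrm{Stab}_n\}$, and the Wigner distance is $C(\rho)=\min_{f\in\mathcal{W}_{\mathrm{free}}}\|W_\rho-f\|_1$. The stabilizer extent (for mixed states) is $\Gamma(\rho)=\min\{\sum_i|\alpha_i|:\rho=\sum_i\alpha_i\sigma_i,\ \alpha_i\in\mathbb{R},\ \sigma_i\in\mathrm{Stab}_n\}$ (finite sums).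 $M_n=\max_{\sigma\in\mathrm{Stab}_n}\|W_\sigma\|_1$. *)

theory Defs
  imports Complex_Main "Jordan_Normal_Form.Matrix"
begin

definition pauliX :: "complex mat" where
  "pauliX = mat 2 2 (\<lambda>(i,j). if i \<noteq> j then 1 else 0)"

definition pauliY :: "complex mat" where
  "pauliY = mat 2 2 (\<lambda>(i,j). if i = 0 \<and> j = 1 then - \<i> else if i = 1 \<and> j = 0 then \<i> else 0)"

definition pauliZ :: "complex mat" where
  "pauliZ = mat 2 2 (\<lambda>(i,j). if i = j then (if i = 0 then 1 else -1) else 0)"

definition kron :: "complex mat \<Rightarrow> complex mat \<Rightarrow> complex mat" where
  "kron A B = mat (dim_row A * dim_row B) (dim_col A * dim_col B)
     (\<lambda>(i,j). A $$ (i div dim_row B, j div dim_col B) * B $$ (i mod dim_row B, j mod dim_col B))"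

fun kron_list :: "complex mat list \<Rightarrow> complex mat" where
  "kron_list [] = 1\<^sub>m 1"
| "kron_list (A # As) = kron A (kron_list As)"

definition mtrace :: "complex mat \<Rightarrow> complex" where
  "mtrace A = (\<Sum>i<dim_row A. A $$ (i,i))"

definition density_op :: "nat \<Rightarrow> complex mat \<Rightarrow> bool" where
  "density_op n \<rho> \<longleftrightarrow> \<rho> \<in> carrier_mat (2^n) (2^n)
     \<and> (\<forall>i<2^n. \<forall>j<2^n. \<rho> $$ (j,i) = cnj (\<rho> $$ (i,j)))
     \<and> (\<forall>v\<in>carrier_vec (2^n). 0 \<le> Re (\<Sum>i<2^n. cnj (v $ i) * (\<rho> *\<^sub>v v) $ i))
     \<and> mtrace \<rho> = 1"

definition pauli_group :: "nat \<Rightarrow> complex mat set" where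
  "pauli_group n = {c \<cdot>\<^sub>m kron_list Ps | c Ps. c \<in> {1, -1, \<i>, -\<i>} \<and> length Ps = n
       \<and> set Ps \<subseteq> {1\<^sub>m 2, pauliX, pauliY, pauliZ}}"

definition outer :: "nat \<Rightarrow> complex vec \<Rightarrow> complex mat" where
  "outer d \<psi> = mat d d (\<lambda>(i,j). \<psi> $ i * cnj (\<psi> $ j))"

definition stab_state :: "nat \<Rightarrow> complex mat \<Rightarrow> bool" where
  "stab_state n \<sigma> \<longleftrightarrow> (\<exists>S \<psi>.
      S \<subseteq> pauli_group n \<and> 1\<^sub>m (2^n) \<in> S
    \<and> (\<forall>A\<in>S. \<forall>B\<in>S. A * B \<in> S \<and> A * B = B * A)
    \<and> finite S \<and> card S = 2^n \<and> - (1\<^sub>m (2^n)) \<notin> S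
    \<and> \<psi> \<in> carrier_vec (2^n) \<and> (\<Sum>i<2^n. (cmod (\<psi> $ i))\<^sup>2) = 1
    \<and> (\<forall>A\<in>S. A *\<^sub>v \<psi> = \<psi>)
    \<and> (\<forall>\<phi>\<in>carrier_vec (2^n). (\<forall>A\<in>S. A *\<^sub>v \<phi> = \<phi>) \<longrightarrow> (\<exists>c. \<phi> = c \<cdot>\<^sub>v \<psi>))
    \<and> \<sigma> = outer (2^n) \<psi>)"

definition sg :: "bool \<Rightarrow> complex" where
  "sg b = (if b then -1 else 1)"

text \<open>Phase point (q,p) in F_2^2, with True representing 1.\<close>
definition phase_point :: "bool \<times> bool \<Rightarrow> complex mat" where
  "phase_point qp = (case qp of (q,p) \<Rightarrow>
     (1/2) \<cdot>\<^sub>m (1\<^sub>m 2 + sg p \<cdot>\<^sub>m pauliX + (sg q * sg p) \<cdot>\<^sub>m pauliY + sg q \<cdot>\<^sub>m pauliZ))"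

definition phase_op :: "(bool \<times> bool) list \<Rightarrow> complex mat" where
  "phase_op \<alpha> = kron_list (map phase_point \<alpha>)"

definition phase_space :: "nat \<Rightarrow> (bool \<times> bool) list set" where
  "phase_space n = {\<alpha>. length \<alpha> = n}"

definition wigner :: "nat \<Rightarrow> complex mat \<Rightarrow> (bool \<times> bool) list \<Rightarrow> real" where
  "wigner n \<rho> \<alpha> = Re (mtrace (\<rho> * phase_op \<alpha>)) / 2^n"

definition l1_dist :: "nat \<Rightarrow> ((bool \<times> bool) list \<Rightarrow> real) \<Rightarrow> ((bool \<times> bool) list \<Rightarrow> real) \<Rightarrow> real" where
  "l1_dist n f g = (\<Sum>\<alpha>\<in>phase_space n. \<bar>f \<alpha> - g \<alpha>\<bar>)"

definition W_free :: "nat \<Rightarrow> ((bool \<times> bool) list \<Rightarrow> real) set" where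
  "W_free n = {f. \<exists>k (c :: nat \<Rightarrow> real) \<sigma>. (\<forall>i<k. 0 \<le> c i \<and> stab_state n (\<sigma> i))
       \<and> (\<Sum>i<k. c i) = 1 \<and> f = (\<lambda>\<alpha>. \<Sum>i<k. c i * wigner n (\<sigma> i) \<alpha>)}"

definition wigner_distance :: "nat \<Rightarrow> complex mat \<Rightarrow> real" where
  "wigner_distance n \<rho> = Inf {l1_dist n (wigner n \<rho>) f | f. f \<in> W_free n}"

definition stab_extent :: "nat \<Rightarrow> complex mat \<Rightarrow> real" where
  "stab_extent n \<rho> = Inf {(\<Sum>i<k. \<bar>a i\<bar>) | k (a :: nat \<Rightarrow> real) \<sigma>.
       (\<forall>i<k. stab_state n (\<sigma> i))
     \<and> (\<forall>r<2^n. \<forall>s<2^n. \<rho> $$ (r,s) = (\<Sum>i<k. complex_of_real (a i) * \<sigma> i $$ (r,s)))}"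

definition M_max :: "nat \<Rightarrow> real" where
  "M_max n = Sup {l1_dist n (wigner n \<sigma>) (\<lambda>_. 0) | \<sigma>. stab_state n \<sigma>}"

end

theory Submission
  imports Defs
begin

text \<open>
  Write \<open>\<rho> = \<Sum>\<^sub>i a\<^sub>i \<sigma>\<^sub>i\<close> with stabilizer states \<open>\<sigma>\<^sub>i\<close>. Taking traces gives
  \<open>\<Sum>\<^sub>i a\<^sub>i = 1\<close>, so the positive and negative parts \<open>P\<close>, \<open>N\<close> of the coefficients satisfy
  \<open>P - N = 1\<close> and \<open>\<Sum>\<^sub>i |a\<^sub>i| = P + N = 1 + 2N\<close>. The normalised positive part
  \<open>g = \<Sum>\<^sub>i max a\<^sub>i 0 W\<^sub>\<sigma>\<^sub>i / P\<close> lies in the free Wigner polytope, and since the Wigner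
  function is linear, \<open>W\<^sub>\<rho> - g = \<Sum>\<^sub>i (a\<^sub>i - max a\<^sub>i 0 / P) W\<^sub>\<sigma>\<^sub>i\<close> has
  \<open>\<ell>\<^sub>1\<close>-norm at most \<open>M\<^sub>n (P (N / P) + N) = M\<^sub>n (\<Sum>\<^sub>i |a\<^sub>i| - 1)\<close>.
  Hence \<open>C(\<rho>) \<le> M\<^sub>n (\<Sum>\<^sub>i |a\<^sub>i| - 1)\<close> for every decomposition.

  For the infimum defining the extent to be meaningful, decompositions must exist: the
  projectors onto \<open>|0\<rangle>, |1\<rangle>, |+\<rangle>, |+i\<rangle>\<close> span the Hermitian \<open>2 \<times> 2\<close> matrices over the
  reals, and tensoring an \<open>n\<close>-qubit stabilizer state with one of them gives an
  \<open>(n+1)\<close>-qubit stabilizer state (with stabilizer group \<open>{I, g} \<otimes> S\<close>), so by induction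
  product stabilizer states already span all Hermitian matrices.
\<close>

lemma sum_lessThan_double:
  "(\<Sum>j<2 * (d::nat). f j) = (\<Sum>j<d. f j) + (\<Sum>j<d. f (d + j))"
proof -
  have "sum f {0..<2 * d} = sum f {0..<d} + sum f {d..<2 * d}"
    by (rule sum.atLeastLessThan_concat[symmetric]) auto
  moreover have "sum f {d..<2 * d} = sum (\<lambda>j. f (j + d)) {0..<d}"
    using sum.shift_bounds_nat_ivl[of f 0 d d] by (simp add: mult_2)
  ultimately show ?thesis by (simp add: atLeast0LessThan add.commute)
qed

lemma sum_lessThan_2: "(\<Sum>j<2. f j) = f 0 + f (1::nat)"
  by (simp add: numeral_2_eq_2)

lemma less_2_cases: "(i::nat) < 2 \<Longrightarrow> i = 0 \<or> i = 1"
  by auto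

lemma div_mod_less_double:
  assumes "r < 2 * (d::nat)"
  shows "r div d < 2" and "r mod d < d"
  using assms by (simp_all add: less_mult_imp_div_less mult.commute)

lemma index_mult_mat_sum:
  "A \<in> carrier_mat n m \<Longrightarrow> B \<in> carrier_mat m p \<Longrightarrow> i < n \<Longrightarrow> j < p \<Longrightarrow>
    (A * B) $$ (i, j) = (\<Sum>t<m. A $$ (i, t) * B $$ (t, j))"
  by (simp add: scalar_prod_def atLeast0LessThan)

lemma index_mult_mat_vec_sum:
  "A \<in> carrier_mat n m \<Longrightarrow> v \<in> carrier_vec m \<Longrightarrow> i < n \<Longrightarrow>
    (A *\<^sub>v v) $ i = (\<Sum>t<m. A $$ (i, t) * v $ t)"
  by (simp add: scalar_prod_def atLeast0LessThan)

lemma index_mult_mat_2: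
  assumes "A \<in> carrier_mat 2 2" "B \<in> carrier_mat 2 2" "i < 2" "j < 2"
  shows "(A * B) $$ (i, j) = A $$ (i, 0) * B $$ (0, j) + A $$ (i, 1) * B $$ (1, j)"
  using index_mult_mat_sum[OF assms] by (simp add: sum_lessThan_2)

lemma index_mult_mat_vec_2:
  assumes "A \<in> carrier_mat 2 2" "v \<in> carrier_vec 2" "i < 2"
  shows "(A *\<^sub>v v) $ i = A $$ (i, 0) * v $ 0 + A $$ (i, 1) * v $ 1"
  using index_mult_mat_vec_sum[OF assms] by (simp add: sum_lessThan_2)

lemma vec_2_eqI:
  assumes "u \<in> carrier_vec 2" "v \<in> carrier_vec 2" "u $ 0 = v $ 0" "u $ 1 = v $ 1"
  shows "u = v"
proof (rule eq_vecI)
  fix i assume "i < dim_vec v"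
  then have "i = 0 \<or> i = 1" using assms(2) by auto
  then show "u $ i = v $ i" using assms by auto
qed (use assms in auto)

lemma dim_kron [simp]:
  "dim_row (kron A B) = dim_row A * dim_row B"
  "dim_col (kron A B) = dim_col A * dim_col B"
  by (auto simp: kron_def)

lemma kron_carrier_mat:
  "A \<in> carrier_mat m m' \<Longrightarrow> B \<in> carrier_mat d d' \<Longrightarrow> kron A B \<in> carrier_mat (m * d) (m' * d')"
  by (metis carrier_matD carrier_matI dim_kron)

lemma index_kron:
  "A \<in> carrier_mat m m' \<Longrightarrow> B \<in> carrier_mat d d' \<Longrightarrow> r < m * d \<Longrightarrow> s < m' * d' \<Longrightarrow>
    kron A B $$ (r, s) = A $$ (r div d, s div d') * B $$ (r mod d, s mod d')"
  unfolding kron_def by (simp add: carrier_matD)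

lemma index_kron_block:
  assumes A: "A \<in> carrier_mat m m'" and B: "B \<in> carrier_mat d d'"
    and "a < m" "b < m'" "i < d" "j < d'"
  shows "kron A B $$ (a * d + i, b * d' + j) = A $$ (a, b) * B $$ (i, j)"
proof -
  have "a * d + i < m * d" if "a < m" "i < d" for a m i d :: nat
  proof -
    have "a * d + i < Suc a * d" using \<open>i < d\<close> by simp
    also have "\<dots> \<le> m * d" using \<open>a < m\<close> by (intro mult_le_mono1) simp
    finally show ?thesis .
  qed
  then show ?thesis using assms by (simp add: index_kron[OF A B])
qed

lemma kron_list_carrier_mat:
  "set Ps \<subseteq> carrier_mat 2 2 \<Longrightarrow> kron_list Ps \<in> carrier_mat (2 ^ length Ps) (2 ^ length Ps)"
proof (induction Ps)
  case (Cons P Ps)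
  then show ?case using kron_carrier_mat[of P 2 2 "kron_list Ps"] by simp
qed simp

lemma pauli_carrier_mat:
  "pauliX \<in> carrier_mat 2 2" "pauliY \<in> carrier_mat 2 2" "pauliZ \<in> carrier_mat 2 2"
  by (simp_all add: pauliX_def pauliY_def pauliZ_def)

lemma pauli_group_carrier_mat:
  assumes "A \<in> pauli_group n"
  shows "A \<in> carrier_mat (2 ^ n) (2 ^ n)"
proof -
  obtain c Ps where A: "A = c \<cdot>\<^sub>m kron_list Ps" and "length Ps = n"
    and "set Ps \<subseteq> {1\<^sub>m 2, pauliX, pauliY, pauliZ}"
    using assms unfolding pauli_group_def by blast
  moreover have "{1\<^sub>m 2, pauliX, pauliY, pauliZ} \<subseteq> carrier_mat 2 2"
    using pauli_carrier_mat by simp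
  ultimately show ?thesis
    using kron_list_carrier_mat[of Ps] unfolding A by (metis order_trans smult_carrier_mat)
qed

lemma index_kron_mult_vec:
  assumes A: "A \<in> carrier_mat 2 2" and B: "B \<in> carrier_mat d d"
    and v: "v \<in> carrier_vec (2 * d)" and r: "r < 2 * d"
  shows "(kron A B *\<^sub>v v) $ r = A $$ (r div d, 0) * (\<Sum>j<d. B $$ (r mod d, j) * v $ j)
      + A $$ (r div d, 1) * (\<Sum>j<d. B $$ (r mod d, j) * v $ (d + j))"
proof -
  have "(kron A B *\<^sub>v v) $ r = (\<Sum>t<2 * d. kron A B $$ (r, t) * v $ t)"
    using kron_carrier_mat[OF A B] v r by (rule index_mult_mat_vec_sum)
  also have "\<dots> = (\<Sum>t<d. kron A B $$ (r, t) * v $ t) + (\<Sum>t<d. kron A B $$ (r, d + t) * v $ (d + t))"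
    by (rule sum_lessThan_double)
  finally show ?thesis
    using r by (simp add: sum_distrib_left index_kron[OF A B] mult.assoc)
qed

lemma kron_mult_kron:
  assumes A: "A \<in> carrier_mat 2 2" and C: "C \<in> carrier_mat 2 2"
    and B: "B \<in> carrier_mat d d" and D: "D \<in> carrier_mat d d"
  shows "kron A B * kron C D = kron (A * C) (B * D)"
proof (rule eq_matI)
  fix r s assume "r < dim_row (kron (A * C) (B * D))" "s < dim_col (kron (A * C) (B * D))"
  then have r: "r < 2 * d" and s: "s < 2 * d" using A B C D by auto
  note rs = div_mod_less_double[OF r] div_mod_less_double[OF s]
  let ?BD = "\<Sum>t<d. B $$ (r mod d, t) * D $$ (t, s mod d)"
  have "(kron A B * kron C D) $$ (r, s) = (\<Sum>t<2 * d. kron A B $$ (r, t) * kron C D $$ (t, s))"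
    using kron_carrier_mat[OF A B] kron_carrier_mat[OF C D] r s by (rule index_mult_mat_sum)
  also have "\<dots> = (\<Sum>t<d. kron A B $$ (r, t) * kron C D $$ (t, s))
      + (\<Sum>t<d. kron A B $$ (r, d + t) * kron C D $$ (d + t, s))"
    by (rule sum_lessThan_double)
  also have "\<dots> = A $$ (r div d, 0) * C $$ (0, s div d) * ?BD + A $$ (r div d, 1) * C $$ (1, s div d) * ?BD"
    using r s by (simp add: index_kron[OF A B] index_kron[OF C D] sum_distrib_left algebra_simps)
  also have "\<dots> = (A * C) $$ (r div d, s div d) * (B * D) $$ (r mod d, s mod d)"
    using rs by (simp add: index_mult_mat_sum[OF A C] index_mult_mat_sum[OF B D] sum_lessThan_2 algebra_simps)
  also have "\<dots> = kron (A * C) (B * D) $$ (r, s)"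
    using r s by (simp add: index_kron[OF mult_carrier_mat[OF A C] mult_carrier_mat[OF B D]])
  finally show "(kron A B * kron C D) $$ (r, s) = kron (A * C) (B * D) $$ (r, s)" .
qed (use A B C D in auto)

lemma smult_smult_mat: "a \<cdot>\<^sub>m (b \<cdot>\<^sub>m A) = (a * b :: 'a :: semigroup_mult) \<cdot>\<^sub>m A"
  by (rule eq_matI) (auto simp: mult.assoc)

lemma one_smult_mat [simp]: "(1 :: 'a :: monoid_mult) \<cdot>\<^sub>m A = A"
  by (rule eq_matI) auto

lemma kron_smult_right: "kron A (c \<cdot>\<^sub>m B) = c \<cdot>\<^sub>m kron A B"
proof (rule eq_matI)
  fix i j assume i: "i < dim_row (c \<cdot>\<^sub>m kron A B)" and j: "j < dim_col (c \<cdot>\<^sub>m kron A B)"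
  then have "0 < dim_row B" "0 < dim_col B" by (auto intro: gr0I)
  with i j show "kron A (c \<cdot>\<^sub>m B) $$ (i, j) = (c \<cdot>\<^sub>m kron A B) $$ (i, j)"
    by (simp add: kron_def)
qed (simp_all add: kron_def)

lemma kron_smult_left: "kron (c \<cdot>\<^sub>m A) B = c \<cdot>\<^sub>m kron A B"
proof (rule eq_matI)
  fix i j assume "i < dim_row (c \<cdot>\<^sub>m kron A B)" "j < dim_col (c \<cdot>\<^sub>m kron A B)"
  moreover from this have "i div dim_row B < dim_row A" "j div dim_col B < dim_col A"
    by (simp_all add: less_mult_imp_div_less)
  ultimately show "kron (c \<cdot>\<^sub>m A) B $$ (i, j) = (c \<cdot>\<^sub>m kron A B) $$ (i, j)"
    by (simp add: kron_def)
qed (simp_all add: kron_def)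

lemma kron_one_one: "kron (1\<^sub>m 2) (1\<^sub>m d) = 1\<^sub>m (2 * d)"
proof (rule eq_matI)
  fix r s assume "r < dim_row (1\<^sub>m (2 * d))" "s < dim_col (1\<^sub>m (2 * d) :: complex mat)"
  then have r: "r < 2 * d" and s: "s < 2 * d" by auto
  have "r div d = s div d \<Longrightarrow> r mod d = s mod d \<Longrightarrow> r = s"
    by (metis div_mult_mod_eq)
  then show "kron (1\<^sub>m 2) (1\<^sub>m d) $$ (r, s) = 1\<^sub>m (2 * d) $$ (r, s)"
    using r s div_mod_less_double[OF r] div_mod_less_double[OF s]
    by (auto simp: index_kron[of "1\<^sub>m 2" 2 2 "1\<^sub>m d" d d])
qed auto

definition kron_vec :: "nat \<Rightarrow> complex vec \<Rightarrow> complex vec \<Rightarrow> complex vec" where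
  "kron_vec d u v = vec (2 * d) (\<lambda>i. u $ (i div d) * v $ (i mod d))"

lemma kron_vec_carrier: "kron_vec d u v \<in> carrier_vec (2 * d)"
  by (simp add: kron_vec_def)

lemma index_kron_vec:
  "j < d \<Longrightarrow> kron_vec d u v $ j = u $ 0 * v $ j"
  "j < d \<Longrightarrow> kron_vec d u v $ (d + j) = u $ 1 * v $ j"
  by (simp_all add: kron_vec_def)

lemma kron_mult_kron_vec:
  assumes A: "A \<in> carrier_mat 2 2" and B: "B \<in> carrier_mat d d"
    and u: "u \<in> carrier_vec 2" and v: "v \<in> carrier_vec d"
  shows "kron A B *\<^sub>v kron_vec d u v = kron_vec d (A *\<^sub>v u) (B *\<^sub>v v)"
proof (rule eq_vecI)
  fix r assume "r < dim_vec (kron_vec d (A *\<^sub>v u) (B *\<^sub>v v))"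
  then have r: "r < 2 * d" by (simp add: kron_vec_def)
  note rd = div_mod_less_double[OF r]
  have "(\<Sum>j<d. B $$ (r mod d, j) * kron_vec d u v $ j) = u $ 0 * (B *\<^sub>v v) $ (r mod d)"
    and "(\<Sum>j<d. B $$ (r mod d, j) * kron_vec d u v $ (d + j)) = u $ 1 * (B *\<^sub>v v) $ (r mod d)"
    using rd by (simp_all add: kron_vec_def index_mult_mat_vec_sum[OF B v] sum_distrib_left algebra_simps)
  then have "(kron A B *\<^sub>v kron_vec d u v) $ r
      = A $$ (r div d, 0) * (u $ 0 * (B *\<^sub>v v) $ (r mod d)) + A $$ (r div d, 1) * (u $ 1 * (B *\<^sub>v v) $ (r mod d))"
    by (simp add: index_kron_mult_vec[OF A B kron_vec_carrier r])
  also have "\<dots> = kron_vec d (A *\<^sub>v u) (B *\<^sub>v v) $ r"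
    using r rd by (simp add: kron_vec_def index_mult_mat_vec_sum[OF A u] sum_lessThan_2 algebra_simps)
  finally show "(kron A B *\<^sub>v kron_vec d u v) $ r = kron_vec d (A *\<^sub>v u) (B *\<^sub>v v) $ r" .
qed (use A B in \<open>simp add: kron_vec_def\<close>)

lemma sum_norm_kron_vec:
  "(\<Sum>j<2 * d. (cmod (kron_vec d u v $ j))\<^sup>2) = (\<Sum>a<2. (cmod (u $ a))\<^sup>2) * (\<Sum>j<d. (cmod (v $ j))\<^sup>2)"
proof -
  have "(\<Sum>j<2 * d. (cmod (kron_vec d u v $ j))\<^sup>2)
      = (\<Sum>j<d. (cmod (u $ 0))\<^sup>2 * (cmod (v $ j))\<^sup>2) + (\<Sum>j<d. (cmod (u $ 1))\<^sup>2 * (cmod (v $ j))\<^sup>2)"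
    unfolding sum_lessThan_double by (intro arg_cong2[where f = "(+)"] sum.cong)
      (auto simp: index_kron_vec norm_mult power_mult_distrib)
  then show ?thesis by (simp add: sum_lessThan_2 sum_distrib_left algebra_simps)
qed

lemma outer_carrier_mat: "outer d v \<in> carrier_mat d d"
  by (simp add: outer_def)

lemma kron_outer_outer: "0 < d \<Longrightarrow> kron (outer 2 u) (outer d v) = outer (2 * d) (kron_vec d u v)"
proof (rule eq_matI)
  fix r s assume "0 < d" "r < dim_row (outer (2 * d) (kron_vec d u v))" "s < dim_col (outer (2 * d) (kron_vec d u v))"
  then have r: "r < 2 * d" and s: "s < 2 * d" by (auto simp: outer_def)
  then show "kron (outer 2 u) (outer d v) $$ (r, s) = outer (2 * d) (kron_vec d u v) $$ (r, s)"
    using index_kron[OF outer_carrier_mat outer_carrier_mat r s] div_mod_less_double[OF r] div_mod_less_double[OF s]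
    by (simp add: outer_def kron_vec_def)
qed (auto simp: outer_def)

text \<open>The states \<open>|0\<rangle>, |1\<rangle>, |+\<rangle>, |+i\<rangle>\<close>; \<open>qubit_ket k\<close> is the \<open>+1\<close> eigenvector of
  the signed Pauli matrix \<open>qubit_gen k\<close>, so its stabilizer group is \<open>{I, qubit_gen k}\<close>.\<close>

datatype qubit_stab = Ket0 | Ket1 | KetPlus | KetPlusI

definition sqrt_half :: complex where
  "sqrt_half = complex_of_real (sqrt (1 / 2))"

lemma sqrt_half_sq: "sqrt_half * sqrt_half = 1 / 2"
proof -
  have "sqrt_half * sqrt_half = complex_of_real (sqrt (1 / 2) * sqrt (1 / 2))"
    unfolding sqrt_half_def of_real_mult ..
  then show ?thesis by simp
qed

lemma cnj_sqrt_half [simp]: "cnj sqrt_half = sqrt_half"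
  by (simp add: sqrt_half_def)

lemma cmod_sqrt_half_sq: "(cmod sqrt_half)\<^sup>2 = 1 / 2"
  by (simp add: sqrt_half_def)

fun qubit_pauli :: "qubit_stab \<Rightarrow> complex mat" where
  "qubit_pauli Ket0 = pauliZ"
| "qubit_pauli Ket1 = pauliZ"
| "qubit_pauli KetPlus = pauliX"
| "qubit_pauli KetPlusI = pauliY"

fun qubit_sign :: "qubit_stab \<Rightarrow> complex" where
  "qubit_sign Ket1 = -1"
| "qubit_sign _ = 1"

definition qubit_gen :: "qubit_stab \<Rightarrow> complex mat" where
  "qubit_gen k = qubit_sign k \<cdot>\<^sub>m qubit_pauli k"

fun qubit_ket :: "qubit_stab \<Rightarrow> complex vec" where
  "qubit_ket Ket0 = vec 2 (\<lambda>i. if i = 0 then 1 else 0)"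
| "qubit_ket Ket1 = vec 2 (\<lambda>i. if i = 0 then 0 else 1)"
| "qubit_ket KetPlus = vec 2 (\<lambda>i. sqrt_half)"
| "qubit_ket KetPlusI = vec 2 (\<lambda>i. if i = 0 then sqrt_half else \<i> * sqrt_half)"

lemma qubit_pauli_mem: "qubit_pauli k \<in> {pauliX, pauliY, pauliZ}"
  by (cases k) simp_all

lemma qubit_sign_mem: "qubit_sign k \<in> {1, -1}"
  by (cases k) simp_all

lemma qubit_gen_carrier_mat: "qubit_gen k \<in> carrier_mat 2 2"
  by (cases k) (simp_all add: qubit_gen_def pauli_carrier_mat)

lemma qubit_ket_carrier_vec: "qubit_ket k \<in> carrier_vec 2"
  by (cases k) simp_all

lemmas pauli_defs = pauliX_def pauliY_def pauliZ_def

lemma index_qubit_gen: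
  "i < 2 \<Longrightarrow> j < 2 \<Longrightarrow> qubit_gen k $$ (i, j) = qubit_sign k * qubit_pauli k $$ (i, j)"
  by (cases k) (simp_all add: qubit_gen_def pauli_defs)

lemma qubit_gen_traceless: "qubit_gen k $$ (0, 0) + qubit_gen k $$ (1, 1) = 0"
  by (cases k) (simp_all add: index_qubit_gen pauli_defs)

lemma qubit_gen_nonzero_entry: "qubit_gen k $$ (0, 0) \<noteq> 0 \<or> qubit_gen k $$ (0, 1) \<noteq> 0"
  by (cases k) (simp_all add: index_qubit_gen pauli_defs)

lemma pauli_involution:
  assumes "P \<in> {pauliX, pauliY, pauliZ}"
  shows "P * P = 1\<^sub>m 2"
proof -
  have P: "P \<in> carrier_mat 2 2" using assms pauli_carrier_mat by auto
  have "(P * P) $$ (i, j) = 1\<^sub>m 2 $$ (i, j)" if "i < 2" "j < 2" for i j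
    unfolding index_mult_mat_2[OF P P that]
    using assms less_2_cases[OF that(1)] less_2_cases[OF that(2)] by (auto simp: pauli_defs)
  then show ?thesis using P by (intro eq_matI) auto
qed

lemma qubit_gen_involution: "qubit_gen k * qubit_gen k = 1\<^sub>m 2"
proof -
  have P: "qubit_pauli k \<in> carrier_mat 2 2"
    using qubit_pauli_mem[of k] pauli_carrier_mat by auto
  have "qubit_gen k * qubit_gen k = qubit_sign k \<cdot>\<^sub>m (qubit_sign k \<cdot>\<^sub>m (qubit_pauli k * qubit_pauli k))"
    unfolding qubit_gen_def mult_smult_assoc_mat[OF P smult_carrier_mat[OF P]] mult_smult_distrib[OF P P] ..
  also have "\<dots> = (qubit_sign k * qubit_sign k) \<cdot>\<^sub>m 1\<^sub>m 2"
    unfolding smult_smult_mat pauli_involution[OF qubit_pauli_mem] ..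
  finally show ?thesis by (cases k) simp_all
qed

lemma qubit_gen_fixes_ket: "qubit_gen k *\<^sub>v qubit_ket k = qubit_ket k"
proof -
  have entries: "(qubit_gen k *\<^sub>v qubit_ket k) $ i = qubit_ket k $ i" if "i < 2" for i
    unfolding index_mult_mat_vec_2[OF qubit_gen_carrier_mat qubit_ket_carrier_vec that]
    using less_2_cases[OF that] by (cases k) (auto simp: index_qubit_gen pauli_defs)
  show ?thesis
    using entries[of 0] entries[of 1]
    by (intro vec_2_eqI mult_mat_vec_carrier[OF qubit_gen_carrier_mat] qubit_ket_carrier_vec) simp_all
qed

lemma qubit_gen_fixed_vec:
  assumes v: "v \<in> carrier_vec 2" and fixed: "qubit_gen k *\<^sub>v v = v"
  shows "\<exists>t. v = t \<cdot>\<^sub>v qubit_ket k"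
proof -
  have eqs: "qubit_gen k $$ (i, 0) * v $ 0 + qubit_gen k $$ (i, 1) * v $ 1 = v $ i" if "i < 2" for i
    using fixed index_mult_mat_vec_2[OF qubit_gen_carrier_mat[of k] v that] by simp
  have "\<exists>t. v $ 0 = t * qubit_ket k $ 0 \<and> v $ 1 = t * qubit_ket k $ 1"
  proof (cases k)
    case KetPlus
    then have "v $ 1 = v $ 0" using eqs[of 0] by (simp add: index_qubit_gen pauli_defs)
    then show ?thesis using KetPlus sqrt_half_sq
      by (intro exI[of _ "2 * sqrt_half * v $ 0"]) (simp add: algebra_simps)
  next
    case KetPlusI
    then have "v $ 1 = \<i> * v $ 0" using eqs[of 1] by (simp add: index_qubit_gen pauli_defs)
    then show ?thesis using KetPlusI sqrt_half_sq
      by (intro exI[of _ "2 * sqrt_half * v $ 0"]) (simp add: algebra_simps)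
  qed (use eqs[of 0] eqs[of 1] in \<open>auto simp: index_qubit_gen pauli_defs\<close>)
  then obtain t where "v $ 0 = t * qubit_ket k $ 0" "v $ 1 = t * qubit_ket k $ 1"
    by blast
  then have "v = t \<cdot>\<^sub>v qubit_ket k"
    using v qubit_ket_carrier_vec[of k] carrier_vecD[OF qubit_ket_carrier_vec[of k]]
    by (intro vec_2_eqI) simp_all
  then show ?thesis ..
qed

lemma sum_norm_qubit_ket: "(\<Sum>i<2. (cmod (qubit_ket k $ i))\<^sup>2) = 1"
  by (cases k) (simp_all add: sum_lessThan_2 norm_mult cmod_sqrt_half_sq)

lemma kron_cancel_left:
  assumes A: "A \<in> carrier_mat 2 2" and B: "B \<in> carrier_mat d d" and D: "D \<in> carrier_mat d d"
    and ab: "a < 2" "b < 2" "A $$ (a, b) \<noteq> 0" and eq: "kron A B = kron A D"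
  shows "B = D"
proof (rule eq_matI)
  fix i j assume "i < dim_row D" "j < dim_col D"
  then have i: "i < d" and j: "j < d" using D by auto
  have "A $$ (a, b) * B $$ (i, j) = A $$ (a, b) * D $$ (i, j)"
    using eq index_kron_block[OF A B ab(1,2) i j] index_kron_block[OF A D ab(1,2) i j] by metis
  then show "B $$ (i, j) = D $$ (i, j)" using ab(3) by simp
qed (use B D in auto)

lemma kron_one_eq_kron_traceless:
  assumes G: "G \<in> carrier_mat 2 2" and tr: "G $$ (0, 0) + G $$ (1, 1) = 0"
    and B: "B \<in> carrier_mat d d" and D: "D \<in> carrier_mat d d"
    and eq: "kron (1\<^sub>m 2) B = kron G D" and i: "i < d" and j: "j < d"
  shows "B $$ (i, j) = 0"
proof -
  have "B $$ (i, j) = G $$ (a, a) * D $$ (i, j)" if "a < 2" for a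
  proof -
    have "B $$ (i, j) = kron (1\<^sub>m 2) B $$ (a * d + i, a * d + j)"
      using index_kron_block[OF one_carrier_mat B that that i j] that by simp
    also have "\<dots> = G $$ (a, a) * D $$ (i, j)"
      unfolding eq by (rule index_kron_block[OF G D that that i j])
    finally show ?thesis .
  qed
  from this[of 0] this[of 1]
  have "B $$ (i, j) + B $$ (i, j) = (G $$ (0, 0) + G $$ (1, 1)) * D $$ (i, j)"
    by (metis distrib_right pos2 one_less_numeral_iff semiring_norm(76))
  then show ?thesis using tr by simp
qed

lemma kron_traceless_neq_minus_one:
  assumes G: "G \<in> carrier_mat 2 2" and tr: "G $$ (0, 0) + G $$ (1, 1) = 0"
    and D: "D \<in> carrier_mat d d" and d: "0 < d"
  shows "kron G D \<noteq> - 1\<^sub>m (2 * d)"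
proof
  assume eq: "kron G D = - 1\<^sub>m (2 * d)"
  have "G $$ (a, a) * D $$ (0, 0) = -1" if "a < 2" for a
  proof -
    have "G $$ (a, a) * D $$ (0, 0) = kron G D $$ (a * d + 0, a * d + 0)"
      by (rule index_kron_block[OF G D that that d d, symmetric])
    also have "\<dots> = -1"
    proof -
      have "a * d < 2 * d" using that d by simp
      then show ?thesis unfolding eq by simp
    qed
    finally show ?thesis .
  qed
  from this[of 0] this[of 1] have "(G $$ (0, 0) + G $$ (1, 1)) * D $$ (0, 0) = -1 + -1"
    by (metis distrib_right pos2 one_less_numeral_iff semiring_norm(76))
  then show False using tr by simp
qed

lemma kron_one_eq_minus_one:
  assumes B: "B \<in> carrier_mat d d" and eq: "kron (1\<^sub>m 2) B = - 1\<^sub>m (2 * d)"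
  shows "B = - 1\<^sub>m d"
proof (rule eq_matI)
  fix i j assume "i < dim_row (- 1\<^sub>m d :: complex mat)" "j < dim_col (- 1\<^sub>m d :: complex mat)"
  then have i: "i < d" and j: "j < d" by auto
  have "kron (1\<^sub>m 2) B $$ (i, j) = B $$ (i, j)"
    using index_kron[OF one_carrier_mat[of 2] B, of i j] i j by simp
  then show "B $$ (i, j) = (- 1\<^sub>m d :: complex mat) $$ (i, j)" using eq i j by simp
qed (use B in auto)

section \<open>Product stabilizer states\<close>

definition stabilizer_of :: "nat \<Rightarrow> complex mat set \<Rightarrow> complex vec \<Rightarrow> bool" where
  "stabilizer_of n S \<psi> \<longleftrightarrow> S \<subseteq> pauli_group n \<and> 1\<^sub>m (2 ^ n) \<in> S
    \<and> (\<forall>A\<in>S. \<forall>B\<in>S. A * B \<in> S \<and> A * B = B * A)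
    \<and> finite S \<and> card S = 2 ^ n \<and> - 1\<^sub>m (2 ^ n) \<notin> S
    \<and> \<psi> \<in> carrier_vec (2 ^ n) \<and> (\<Sum>i<2 ^ n. (cmod (\<psi> $ i))\<^sup>2) = 1
    \<and> (\<forall>A\<in>S. A *\<^sub>v \<psi> = \<psi>)
    \<and> (\<forall>\<phi>\<in>carrier_vec (2 ^ n). (\<forall>A\<in>S. A *\<^sub>v \<phi> = \<phi>) \<longrightarrow> (\<exists>c. \<phi> = c \<cdot>\<^sub>v \<psi>))"

lemma stab_state_iff_stabilizer_of:
  "stab_state n \<sigma> \<longleftrightarrow> (\<exists>S \<psi>. stabilizer_of n S \<psi> \<and> \<sigma> = outer (2 ^ n) \<psi>)"
  unfolding stab_state_def stabilizer_of_def by blast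

definition kron_group :: "complex mat \<Rightarrow> complex mat set \<Rightarrow> complex mat set" where
  "kron_group G S = (\<lambda>(A, B). kron A B) ` ({1\<^sub>m 2, G} \<times> S)"

lemma kron_vec_smult_left:
  "u \<in> carrier_vec 2 \<Longrightarrow> kron_vec d (t \<cdot>\<^sub>v u) v = t \<cdot>\<^sub>v kron_vec d u v"
  by (rule eq_vecI) (auto simp: kron_vec_def less_mult_imp_div_less mult.commute)

lemma kron_vec_cancel_right:
  assumes u: "u \<in> carrier_vec 2" and u': "u' \<in> carrier_vec 2"
    and i0: "i0 < d" "v $ i0 \<noteq> 0" and eq: "kron_vec d u v = kron_vec d u' v"
  shows "u = u'"
proof (rule vec_2_eqI[OF u u'])
  show "u $ 0 = u' $ 0" "u $ 1 = u' $ 1"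
    using arg_cong[OF eq, of "\<lambda>w. w $ i0"] arg_cong[OF eq, of "\<lambda>w. w $ (d + i0)"] i0
    by (simp_all add: index_kron_vec)
qed

lemma kron_vec_of_halves:
  assumes \<phi>: "\<phi> \<in> carrier_vec (2 * d)" and v: "v \<in> carrier_vec d"
    and lo: "vec d (\<lambda>j. \<phi> $ j) = c0 \<cdot>\<^sub>v v" and hi: "vec d (\<lambda>j. \<phi> $ (d + j)) = c1 \<cdot>\<^sub>v v"
  shows "\<phi> = kron_vec d (vec 2 (\<lambda>a. if a = 0 then c0 else c1)) v"
proof (rule eq_vecI)
  fix r assume "r < dim_vec (kron_vec d (vec 2 (\<lambda>a. if a = 0 then c0 else c1)) v)"
  then have r: "r < 2 * d" by (simp add: kron_vec_def)
  show "\<phi> $ r = kron_vec d (vec 2 (\<lambda>a. if a = 0 then c0 else c1)) v $ r"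
  proof (cases "r < d")
    case True
    then show ?thesis
      using arg_cong[OF lo, of "\<lambda>w. w $ r"] v by (simp add: index_kron_vec)
  next
    case False
    then obtain j where j: "r = d + j" "j < d" using r by (metis add_diff_inverse_nat add_less_imp_less_left mult_2)
    then show ?thesis
      using arg_cong[OF hi, of "\<lambda>w. w $ j"] v by (simp add: index_kron_vec)
  qed
qed (use \<phi> in \<open>simp add: kron_vec_def\<close>)

lemma kron_one_fixed_halves:
  assumes B: "B \<in> carrier_mat d d" and \<phi>: "\<phi> \<in> carrier_vec (2 * d)"
    and fixed: "kron (1\<^sub>m 2) B *\<^sub>v \<phi> = \<phi>"
  shows "B *\<^sub>v vec d (\<lambda>j. \<phi> $ j) = vec d (\<lambda>j. \<phi> $ j)"
    and "B *\<^sub>v vec d (\<lambda>j. \<phi> $ (d + j)) = vec d (\<lambda>j. \<phi> $ (d + j))"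
proof -
  have "(B *\<^sub>v vec d (\<lambda>j. \<phi> $ (a * d + j))) $ i = \<phi> $ (a * d + i)" if "a < 2" "i < d" for a i
  proof -
    have r: "a * d + i < 2 * d" and "(a * d + i) div d = a" "(a * d + i) mod d = i"
      using less_2_cases[OF that(1)] that(2) by auto
    have "(B *\<^sub>v vec d (\<lambda>j. \<phi> $ (a * d + j))) $ i = (\<Sum>j<d. B $$ (i, j) * \<phi> $ (a * d + j))"
      using index_mult_mat_vec_sum[OF B _ that(2)] by simp
    also have "\<dots> = (kron (1\<^sub>m 2) B *\<^sub>v \<phi>) $ (a * d + i)"
      using index_kron_mult_vec[OF one_carrier_mat B \<phi> r] that \<open>(a * d + i) div d = a\<close>
        \<open>(a * d + i) mod d = i\<close> less_2_cases[OF that(1)] by auto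
    finally show ?thesis using fixed by simp
  qed
  from this[of 0] this[of 1] B show "B *\<^sub>v vec d (\<lambda>j. \<phi> $ j) = vec d (\<lambda>j. \<phi> $ j)"
    and "B *\<^sub>v vec d (\<lambda>j. \<phi> $ (d + j)) = vec d (\<lambda>j. \<phi> $ (d + j))"
    by (auto intro!: eq_vecI)
qed

context
  fixes n :: nat and S :: "complex mat set" and \<psi> :: "complex vec" and k :: qubit_stab
  assumes stab: "stabilizer_of n S \<psi>"
begin

lemma stabilizer_carrier_mat: "A \<in> S \<Longrightarrow> A \<in> carrier_mat (2 ^ n) (2 ^ n)"
  using stab pauli_group_carrier_mat unfolding stabilizer_of_def by blast

lemma stabilized_vec_nonzero: obtains i0 where "i0 < 2 ^ n" "\<psi> $ i0 \<noteq> 0"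
proof -
  have "\<not> (\<forall>i<2 ^ n. \<psi> $ i = 0)"
  proof
    assume "\<forall>i<2 ^ n. \<psi> $ i = 0"
    then have "(\<Sum>i<2 ^ n. (cmod (\<psi> $ i))\<^sup>2) = 0" by simp
    then show False using stab unfolding stabilizer_of_def by simp
  qed
  then show ?thesis using that by blast
qed

lemma stabilizer_not_zero:
  assumes "A \<in> S" and zero: "\<forall>i<2 ^ n. \<forall>j<2 ^ n. A $$ (i, j) = 0"
  shows False
proof -
  obtain i0 where i0: "i0 < 2 ^ n" "\<psi> $ i0 \<noteq> 0" by (rule stabilized_vec_nonzero)
  have \<psi>: "\<psi> \<in> carrier_vec (2 ^ n)" and "A *\<^sub>v \<psi> = \<psi>"
    using stab \<open>A \<in> S\<close> unfolding stabilizer_of_def by auto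
  then have "\<psi> $ i0 = (\<Sum>t<2 ^ n. A $$ (i0, t) * \<psi> $ t)"
    using index_mult_mat_vec_sum[OF stabilizer_carrier_mat[OF \<open>A \<in> S\<close>] \<psi> i0(1)] by simp
  also have "\<dots> = 0"
    using zero i0 by simp
  finally show False using i0 by simp
qed

lemma inj_on_kron_group:
  "inj_on (\<lambda>(A, B). kron A B) ({1\<^sub>m 2, qubit_gen k} \<times> S)"
proof (rule inj_onI, clarify)
  fix A B C D assume A: "A \<in> {1\<^sub>m 2, qubit_gen k}" and "B \<in> S"
    and C: "C \<in> {1\<^sub>m 2, qubit_gen k}" and "D \<in> S" and eq: "kron A B = kron C D"
  have B: "B \<in> carrier_mat (2 ^ n) (2 ^ n)" and D: "D \<in> carrier_mat (2 ^ n) (2 ^ n)"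
    using \<open>B \<in> S\<close> \<open>D \<in> S\<close> stabilizer_carrier_mat by auto
  note traceless = kron_one_eq_kron_traceless[OF qubit_gen_carrier_mat qubit_gen_traceless]
  show "A = C \<and> B = D"
  proof (cases "A = C")
    case True
    have "A $$ (0, 0) \<noteq> 0 \<or> A $$ (0, 1) \<noteq> 0"
      using A qubit_gen_nonzero_entry[of k] by auto
    then have "\<exists>b<2. A $$ (0, b) \<noteq> 0"
      by (metis pos2 one_less_numeral_iff semiring_norm(76))
    then obtain b where b: "b < 2" "A $$ (0, b) \<noteq> 0" by blast
    have "A \<in> carrier_mat 2 2" using A qubit_gen_carrier_mat by auto
    then show ?thesis
      using kron_cancel_left[OF _ B D pos2 b] eq True by simp
  next
    case False
    then consider "A = 1\<^sub>m 2" "C = qubit_gen k" | "A = qubit_gen k" "C = 1\<^sub>m 2"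
      using A C by auto
    then show ?thesis
    proof cases
      case 1
      then show ?thesis
        using traceless[OF B D] eq stabilizer_not_zero[OF \<open>B \<in> S\<close>] by blast
    next
      case 2
      then show ?thesis
        using traceless[OF D B] eq stabilizer_not_zero[OF \<open>D \<in> S\<close>] by metis
    qed
  qed
qed

lemma card_kron_group: "card (kron_group (qubit_gen k) S) = 2 ^ Suc n"
proof -
  have "qubit_gen k \<noteq> 1\<^sub>m 2"
  proof
    assume "qubit_gen k = 1\<^sub>m 2"
    then have "qubit_gen k $$ (0, 0) + qubit_gen k $$ (1, 1) = 2" by simp
    then show False using qubit_gen_traceless[of k] by simp
  qed
  then have "card {1\<^sub>m 2, qubit_gen k} = 2" by simp
  then show ?thesis
    using stab unfolding kron_group_def card_image[OF inj_on_kron_group] card_cartesian_product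
    by (simp add: stabilizer_of_def)
qed

lemma kron_group_subset_pauli_group: "kron_group (qubit_gen k) S \<subseteq> pauli_group (Suc n)"
proof
  fix X assume "X \<in> kron_group (qubit_gen k) S"
  then obtain A B where A: "A \<in> {1\<^sub>m 2, qubit_gen k}" and "B \<in> S" and X: "X = kron A B"
    by (auto simp: kron_group_def)
  then obtain c Ps where B: "B = c \<cdot>\<^sub>m kron_list Ps" and c: "c \<in> {1, -1, \<i>, -\<i>}"
    and Ps: "length Ps = n" "set Ps \<subseteq> {1\<^sub>m 2, pauliX, pauliY, pauliZ}"
    using stab unfolding stabilizer_of_def pauli_group_def by blast
  obtain c' P where "A = c' \<cdot>\<^sub>m P" "c' \<in> {1, -1}" "P \<in> {1\<^sub>m 2, pauliX, pauliY, pauliZ}"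
    using A qubit_sign_mem[of k] qubit_pauli_mem[of k] unfolding qubit_gen_def
    by (metis insertCI insertE one_smult_mat)
  then have "X = (c' * c) \<cdot>\<^sub>m kron_list (P # Ps)" and "c' * c \<in> {1, -1, \<i>, -\<i>}"
    using c unfolding X B by (auto simp: kron_smult_left kron_smult_right smult_smult_mat)
  then show "X \<in> pauli_group (Suc n)"
    unfolding pauli_group_def using Ps \<open>P \<in> _\<close> by fastforce
qed

lemma one_mem_kron_group: "1\<^sub>m (2 ^ Suc n) \<in> kron_group (qubit_gen k) S"
proof -
  have "1\<^sub>m (2 ^ Suc n) = kron (1\<^sub>m 2) (1\<^sub>m (2 ^ n))" by (simp add: kron_one_one)
  then show ?thesis using stab unfolding kron_group_def stabilizer_of_def by auto
qed

lemma kron_group_mult_closed_commute: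
  assumes "X \<in> kron_group (qubit_gen k) S" "Y \<in> kron_group (qubit_gen k) S"
  shows "X * Y \<in> kron_group (qubit_gen k) S \<and> X * Y = Y * X"
proof -
  obtain A B C D where A: "A \<in> {1\<^sub>m 2, qubit_gen k}" and "B \<in> S" and X: "X = kron A B"
    and C: "C \<in> {1\<^sub>m 2, qubit_gen k}" and "D \<in> S" and Y: "Y = kron C D"
    using assms by (auto simp: kron_group_def)
  have Ac: "A \<in> carrier_mat 2 2" "C \<in> carrier_mat 2 2"
    using A C qubit_gen_carrier_mat by auto
  have Bc: "B \<in> carrier_mat (2 ^ n) (2 ^ n)" "D \<in> carrier_mat (2 ^ n) (2 ^ n)"
    using \<open>B \<in> S\<close> \<open>D \<in> S\<close> stabilizer_carrier_mat by auto
  have "A * C \<in> {1\<^sub>m 2, qubit_gen k}" "A * C = C * A"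
    using A C qubit_gen_involution[of k] qubit_gen_carrier_mat[of k] by auto
  moreover have "B * D \<in> S" "B * D = D * B"
    using stab \<open>B \<in> S\<close> \<open>D \<in> S\<close> unfolding stabilizer_of_def by auto
  ultimately show ?thesis
    unfolding X Y kron_mult_kron[OF Ac(1) Ac(2) Bc(1) Bc(2)] kron_mult_kron[OF Ac(2) Ac(1) Bc(2) Bc(1)]
    by (auto simp: kron_group_def)
qed

lemma minus_one_notin_kron_group: "- 1\<^sub>m (2 ^ Suc n) \<notin> kron_group (qubit_gen k) S"
proof
  assume "- 1\<^sub>m (2 ^ Suc n) \<in> kron_group (qubit_gen k) S"
  then obtain A B where A: "A \<in> {1\<^sub>m 2, qubit_gen k}" and "B \<in> S"
    and eq: "- 1\<^sub>m (2 * 2 ^ n) = kron A B"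
    by (auto simp: kron_group_def)
  have B: "B \<in> carrier_mat (2 ^ n) (2 ^ n)" using \<open>B \<in> S\<close> stabilizer_carrier_mat by auto
  show False
  proof (cases "A = 1\<^sub>m 2")
    case True
    then show False
      using kron_one_eq_minus_one[OF B] eq stab \<open>B \<in> S\<close> unfolding stabilizer_of_def by auto
  next
    case False
    then show False
      using A eq kron_traceless_neq_minus_one[OF qubit_gen_carrier_mat qubit_gen_traceless B] by auto
  qed
qed

lemma kron_group_fixes_kron_vec:
  assumes "X \<in> kron_group (qubit_gen k) S"
  shows "X *\<^sub>v kron_vec (2 ^ n) (qubit_ket k) \<psi> = kron_vec (2 ^ n) (qubit_ket k) \<psi>"
proof -
  obtain A B where A: "A \<in> {1\<^sub>m 2, qubit_gen k}" and "B \<in> S" and X: "X = kron A B"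
    using assms by (auto simp: kron_group_def)
  have "A \<in> carrier_mat 2 2" "A *\<^sub>v qubit_ket k = qubit_ket k"
    using A qubit_gen_carrier_mat qubit_gen_fixes_ket qubit_ket_carrier_vec by auto
  moreover have "B \<in> carrier_mat (2 ^ n) (2 ^ n)" "\<psi> \<in> carrier_vec (2 ^ n)" "B *\<^sub>v \<psi> = \<psi>"
    using \<open>B \<in> S\<close> stab stabilizer_carrier_mat unfolding stabilizer_of_def by auto
  ultimately show ?thesis
    unfolding X by (simp add: kron_mult_kron_vec qubit_ket_carrier_vec)
qed

lemma kron_group_fixed_vec:
  assumes \<phi>: "\<phi> \<in> carrier_vec (2 ^ Suc n)" and fixed: "\<forall>X\<in>kron_group (qubit_gen k) S. X *\<^sub>v \<phi> = \<phi>"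
  shows "\<exists>t. \<phi> = t \<cdot>\<^sub>v kron_vec (2 ^ n) (qubit_ket k) \<psi>"
proof -
  let ?d = "2 ^ n :: nat"
  have \<psi>: "\<psi> \<in> carrier_vec ?d" and unique: "\<And>\<phi>'. \<phi>' \<in> carrier_vec ?d \<Longrightarrow>
      \<forall>A\<in>S. A *\<^sub>v \<phi>' = \<phi>' \<Longrightarrow> \<exists>c. \<phi>' = c \<cdot>\<^sub>v \<psi>"
    using stab unfolding stabilizer_of_def by auto
  have \<phi>': "\<phi> \<in> carrier_vec (2 * ?d)" using \<phi> by simp
  have "\<forall>B\<in>S. kron (1\<^sub>m 2) B *\<^sub>v \<phi> = \<phi>" using fixed by (auto simp: kron_group_def)
  then obtain c0 c1 where "vec ?d (\<lambda>j. \<phi> $ j) = c0 \<cdot>\<^sub>v \<psi>" "vec ?d (\<lambda>j. \<phi> $ (?d + j)) = c1 \<cdot>\<^sub>v \<psi>"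
    using unique kron_one_fixed_halves[OF stabilizer_carrier_mat \<phi>'] by (metis vec_carrier)
  then have \<phi>_eq: "\<phi> = kron_vec ?d (vec 2 (\<lambda>a. if a = 0 then c0 else c1)) \<psi>" (is "_ = kron_vec _ ?c _")
    by (rule kron_vec_of_halves[OF \<phi>' \<psi>])
  have "kron (qubit_gen k) (1\<^sub>m ?d) \<in> kron_group (qubit_gen k) S"
    using stab unfolding kron_group_def stabilizer_of_def by auto
  then have "kron (qubit_gen k) (1\<^sub>m ?d) *\<^sub>v \<phi> = \<phi>" using fixed by blast
  then have "kron_vec ?d (qubit_gen k *\<^sub>v ?c) (1\<^sub>m ?d *\<^sub>v \<psi>) = kron_vec ?d ?c \<psi>"
    unfolding \<phi>_eq kron_mult_kron_vec[OF qubit_gen_carrier_mat one_carrier_mat vec_carrier \<psi>] .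
  then have eq: "kron_vec ?d (qubit_gen k *\<^sub>v ?c) \<psi> = kron_vec ?d ?c \<psi>"
    using \<psi> by simp
  obtain i0 where i0: "i0 < ?d" "\<psi> $ i0 \<noteq> 0" by (rule stabilized_vec_nonzero)
  have "qubit_gen k *\<^sub>v ?c = ?c"
    by (rule kron_vec_cancel_right[OF mult_mat_vec_carrier[OF qubit_gen_carrier_mat vec_carrier]
          vec_carrier i0 eq])
  then obtain t where "?c = t \<cdot>\<^sub>v qubit_ket k" using qubit_gen_fixed_vec[OF vec_carrier] by blast
  then show ?thesis
    unfolding \<phi>_eq by (auto simp: kron_vec_smult_left qubit_ket_carrier_vec)
qed

lemma stabilizer_of_kron:
  "stabilizer_of (Suc n) (kron_group (qubit_gen k) S) (kron_vec (2 ^ n) (qubit_ket k) \<psi>)"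
proof -
  have "finite (kron_group (qubit_gen k) S)"
    using stab unfolding kron_group_def stabilizer_of_def by simp
  moreover have "(\<Sum>i<2 ^ Suc n. (cmod (kron_vec (2 ^ n) (qubit_ket k) \<psi> $ i))\<^sup>2) = 1"
    using stab sum_norm_kron_vec[of "2 ^ n"] sum_norm_qubit_ket unfolding stabilizer_of_def by simp
  moreover have "kron_vec (2 ^ n) (qubit_ket k) \<psi> \<in> carrier_vec (2 ^ Suc n)"
    using kron_vec_carrier by simp
  ultimately show ?thesis
    unfolding stabilizer_of_def
    using kron_group_subset_pauli_group one_mem_kron_group kron_group_mult_closed_commute
      card_kron_group minus_one_notin_kron_group kron_group_fixes_kron_vec kron_group_fixed_vec
    by blast
qed

end

lemma stab_state_kron:
  assumes "stab_state n \<sigma>"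
  shows "stab_state (Suc n) (kron (outer 2 (qubit_ket k)) \<sigma>)"
proof -
  obtain S \<psi> where stab: "stabilizer_of n S \<psi>" and \<sigma>: "\<sigma> = outer (2 ^ n) \<psi>"
    using assms unfolding stab_state_iff_stabilizer_of by blast
  have "kron (outer 2 (qubit_ket k)) \<sigma> = outer (2 ^ Suc n) (kron_vec (2 ^ n) (qubit_ket k) \<psi>)"
    unfolding \<sigma> by (simp add: kron_outer_outer)
  then show ?thesis
    unfolding stab_state_iff_stabilizer_of using stabilizer_of_kron[OF stab] by blast
qed

lemma stab_state_zero: "stab_state 0 (outer 1 (vec 1 (\<lambda>_. 1)))"
proof -
  have "1\<^sub>m 1 = (1 :: complex) \<cdot>\<^sub>m kron_list []" by simp
  then have "1\<^sub>m 1 \<in> pauli_group 0" unfolding pauli_group_def by force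
  moreover have "- 1\<^sub>m 1 \<noteq> (1\<^sub>m 1 :: complex mat)"
  proof
    assume "- 1\<^sub>m 1 = (1\<^sub>m 1 :: complex mat)"
    then have "(- 1\<^sub>m 1 :: complex mat) $$ (0, 0) = 1\<^sub>m 1 $$ (0, 0)" by simp
    then show False by simp
  qed
  moreover have "\<phi> = (\<phi> $ 0) \<cdot>\<^sub>v vec 1 (\<lambda>_. 1)" if "\<phi> \<in> carrier_vec 1" for \<phi> :: "complex vec"
    by (rule eq_vecI) (use that in auto)
  ultimately show ?thesis
    unfolding stab_state_def by (intro exI[of _ "{1\<^sub>m 1}"] exI[of _ "vec 1 (\<lambda>_. 1)"]) auto
qed

lemma ex_stab_state: "\<exists>\<sigma>. stab_state n \<sigma>"
  by (induction n) (use stab_state_zero stab_state_kron in blast)+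

section \<open>Stabilizer states span the Hermitian matrices\<close>

definition hermitian_mat :: "nat \<Rightarrow> complex mat \<Rightarrow> bool" where
  "hermitian_mat d H \<longleftrightarrow> H \<in> carrier_mat d d \<and> (\<forall>i<d. \<forall>j<d. H $$ (j, i) = cnj (H $$ (i, j)))"

definition stab_combination :: "nat \<Rightarrow> (real \<times> complex mat) list \<Rightarrow> complex mat \<Rightarrow> bool" where
  "stab_combination n L H \<longleftrightarrow> (\<forall>x\<in>set L. stab_state n (snd x))
    \<and> (\<forall>r<2 ^ n. \<forall>s<2 ^ n. H $$ (r, s) = (\<Sum>x\<leftarrow>L. complex_of_real (fst x) * snd x $$ (r, s)))"

lemma stab_state_carrier_mat: "stab_state n \<sigma> \<Longrightarrow> \<sigma> \<in> carrier_mat (2 ^ n) (2 ^ n)"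
  unfolding stab_state_def using outer_carrier_mat by blast

lemma stab_combination_add:
  assumes "stab_combination n L A" "stab_combination n L' B"
    and "A \<in> carrier_mat (2 ^ n) (2 ^ n)" "B \<in> carrier_mat (2 ^ n) (2 ^ n)"
  shows "stab_combination n (L @ L') (A + B)"
  using assms by (auto simp: stab_combination_def)

lemma stab_combination_kron:
  assumes comb: "stab_combination n L G" and G: "G \<in> carrier_mat (2 ^ n) (2 ^ n)"
  shows "stab_combination (Suc n) (map (\<lambda>(c, \<sigma>). (c, kron (outer 2 (qubit_ket k)) \<sigma>)) L)
      (kron (outer 2 (qubit_ket k)) G)"
  unfolding stab_combination_def
proof (intro conjI allI impI)
  let ?P = "outer 2 (qubit_ket k)"
  have stab: "\<forall>x\<in>set L. stab_state n (snd x)" using comb by (simp add: stab_combination_def)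
  then show "\<forall>x\<in>set (map (\<lambda>(c, \<sigma>). (c, kron ?P \<sigma>)) L). stab_state (Suc n) (snd x)"
    using stab_state_kron by fastforce
  fix r s :: nat assume "r < 2 ^ Suc n" "s < 2 ^ Suc n"
  then have r: "r < 2 * 2 ^ n" and s: "s < 2 * 2 ^ n" by simp_all
  note kron_rs = index_kron[OF outer_carrier_mat _ r s]
  have "kron ?P G $$ (r, s)
      = ?P $$ (r div 2 ^ n, s div 2 ^ n) * G $$ (r mod 2 ^ n, s mod 2 ^ n)"
    by (rule kron_rs[OF G])
  also have "\<dots> = (\<Sum>x\<leftarrow>L. complex_of_real (fst x)
      * (?P $$ (r div 2 ^ n, s div 2 ^ n) * snd x $$ (r mod 2 ^ n, s mod 2 ^ n)))"
    using comb div_mod_less_double(2)[OF r] div_mod_less_double(2)[OF s]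
    by (simp add: stab_combination_def sum_list_const_mult[symmetric] mult.left_commute)
  also have "\<dots> = (\<Sum>x\<leftarrow>map (\<lambda>(c, \<sigma>). (c, kron ?P \<sigma>)) L. complex_of_real (fst x) * snd x $$ (r, s))"
    using stab by (auto simp: o_def case_prod_beta kron_rs[OF stab_state_carrier_mat] intro!: arg_cong[where f = sum_list] map_cong)
  finally show "kron ?P G $$ (r, s)
      = (\<Sum>x\<leftarrow>map (\<lambda>(c, \<sigma>). (c, kron ?P \<sigma>)) L. complex_of_real (fst x) * snd x $$ (r, s))" .
qed

lemma index_outer_qubit_ket:
  "outer 2 (qubit_ket Ket0) $$ (0, 0) = 1" "outer 2 (qubit_ket Ket0) $$ (0, 1) = 0"
  "outer 2 (qubit_ket Ket0) $$ (1, 0) = 0" "outer 2 (qubit_ket Ket0) $$ (1, 1) = 0"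
  "outer 2 (qubit_ket Ket1) $$ (0, 0) = 0" "outer 2 (qubit_ket Ket1) $$ (0, 1) = 0"
  "outer 2 (qubit_ket Ket1) $$ (1, 0) = 0" "outer 2 (qubit_ket Ket1) $$ (1, 1) = 1"
  "outer 2 (qubit_ket KetPlus) $$ (0, 0) = 1 / 2" "outer 2 (qubit_ket KetPlus) $$ (0, 1) = 1 / 2"
  "outer 2 (qubit_ket KetPlus) $$ (1, 0) = 1 / 2" "outer 2 (qubit_ket KetPlus) $$ (1, 1) = 1 / 2"
  "outer 2 (qubit_ket KetPlusI) $$ (0, 0) = 1 / 2" "outer 2 (qubit_ket KetPlusI) $$ (0, 1) = - \<i> / 2"
  "outer 2 (qubit_ket KetPlusI) $$ (1, 0) = \<i> / 2" "outer 2 (qubit_ket KetPlusI) $$ (1, 1) = 1 / 2"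
  by (simp_all add: outer_def sqrt_half_sq mult.assoc[symmetric])
    (simp_all add: mult.commute mult.left_commute sqrt_half_sq)

lemma qubit_proj_expansion:
  fixes z :: "nat \<Rightarrow> nat \<Rightarrow> complex"
  assumes "a < 2" "b < 2"
  defines "z2 \<equiv> z 0 1 + z 1 0" and "z3 \<equiv> \<i> * (z 0 1 - z 1 0)"
  shows "z a b = outer 2 (qubit_ket Ket0) $$ (a, b) * (z 0 0 - (z2 + z3) / 2)
      + outer 2 (qubit_ket Ket1) $$ (a, b) * (z 1 1 - (z2 + z3) / 2)
      + outer 2 (qubit_ket KetPlus) $$ (a, b) * z2 + outer 2 (qubit_ket KetPlusI) $$ (a, b) * z3"
proof -
  have ii: "\<i> * (\<i> * c) = - c" for c :: complex by (simp add: mult.assoc[symmetric])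
  have "z 0 1 = (z2 - \<i> * z3) / 2" "z 1 0 = (z2 + \<i> * z3) / 2"
    by (simp_all add: z2_def z3_def ii algebra_simps)
  then show ?thesis
    using less_2_cases[OF assms(1)] less_2_cases[OF assms(2)]
    by (elim disjE) (simp_all add: index_outer_qubit_ket index_outer_qubit_ket[unfolded One_nat_def]
        field_simps del: qubit_ket.simps)
qed

lemma hermitian_block_decomposition:
  assumes "hermitian_mat (2 * d) H"
  obtains G0 G1 G2 G3 where
    "hermitian_mat d G0" "hermitian_mat d G1" "hermitian_mat d G2" "hermitian_mat d G3"
    "H = kron (outer 2 (qubit_ket Ket0)) G0 + kron (outer 2 (qubit_ket Ket1)) G1
      + kron (outer 2 (qubit_ket KetPlus)) G2 + kron (outer 2 (qubit_ket KetPlusI)) G3"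
proof -
  have H: "H \<in> carrier_mat (2 * d) (2 * d)"
    and Hh: "\<And>i j. i < 2 * d \<Longrightarrow> j < 2 * d \<Longrightarrow> H $$ (j, i) = cnj (H $$ (i, j))"
    using assms unfolding hermitian_mat_def by blast+
  define z where "z i j a b = H $$ (a * d + i, b * d + j)" for i j a b
  define g2 where "g2 i j = z i j 0 1 + z i j 1 0" for i j
  define g3 where "g3 i j = \<i> * (z i j 0 1 - z i j 1 0)" for i j
  define g0 where "g0 i j = z i j 0 0 - (g2 i j + g3 i j) / 2" for i j
  define g1 where "g1 i j = z i j 1 1 - (g2 i j + g3 i j) / 2" for i j
  let ?M = "\<lambda>g. mat d d (\<lambda>(i, j). g i j)"
  have herm: "hermitian_mat d (?M g)" if "\<And>i j. i < d \<Longrightarrow> j < d \<Longrightarrow> g j i = cnj (g i j)" for g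
    by (simp add: hermitian_mat_def) (use that in blast)
  have z: "z j i b a = cnj (z i j a b)" if "i < d" "j < d" "a < 2" "b < 2" for i j a b
  proof -
    have "a * d + i < 2 * d" "b * d + j < 2 * d"
      using that less_2_cases[OF that(3)] less_2_cases[OF that(4)] by auto
    then show ?thesis unfolding z_def by (rule Hh)
  qed
  have h2: "g2 j i = cnj (g2 i j)" and h3: "g3 j i = cnj (g3 i j)" if "i < d" "j < d" for i j
    using z[OF that, of 0 1] z[OF that, of 1 0] by (simp_all add: g2_def g3_def algebra_simps)
  have h0: "g0 j i = cnj (g0 i j)" and h1: "g1 j i = cnj (g1 i j)" if "i < d" "j < d" for i j
    using h2[OF that] h3[OF that] z[OF that, of 0 0] z[OF that, of 1 1] by (simp_all add: g0_def g1_def)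
  have "H = kron (outer 2 (qubit_ket Ket0)) (?M g0) + kron (outer 2 (qubit_ket Ket1)) (?M g1)
      + kron (outer 2 (qubit_ket KetPlus)) (?M g2) + kron (outer 2 (qubit_ket KetPlusI)) (?M g3)"
    (is "_ = ?S")
  proof (rule eq_matI)
    fix r s assume "r < dim_row ?S" "s < dim_col ?S"
    then have r: "r < 2 * d" and s: "s < 2 * d" by (simp_all add: outer_def)
    note rs = div_mod_less_double[OF r] div_mod_less_double[OF s]
    have "H $$ (r, s) = z (r mod d) (s mod d) (r div d) (s div d)" by (simp add: z_def)
    also have "\<dots> = ?S $$ (r, s)"
      unfolding qubit_proj_expansion[OF rs(1,3), of "z (r mod d) (s mod d)"] using r s rs
      by (simp add: index_kron[OF outer_carrier_mat mat_carrier r s] carrier_matD[OF outer_carrier_mat]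
          g0_def g1_def g2_def g3_def del: qubit_ket.simps)
    finally show "H $$ (r, s) = ?S $$ (r, s)" .
  qed (use H in \<open>simp_all add: outer_def\<close>)
  then show ?thesis
    using that herm h0 h1 h2 h3 by blast
qed

lemma stab_combination_zero:
  assumes "hermitian_mat 1 H"
  shows "\<exists>L. stab_combination 0 L H"
proof -
  have herm: "\<forall>i<1. \<forall>j<1. H $$ (j, i) = cnj (H $$ (i, j))"
    using assms unfolding hermitian_mat_def by (rule conjunct2)
  have "H $$ (0, 0) = cnj (H $$ (0, 0))"
    by (rule herm[rule_format]) simp_all
  then have "Im (H $$ (0, 0)) = Im (cnj (H $$ (0, 0)))"
    by (rule arg_cong)
  then have "Im (H $$ (0, 0)) = 0" by simp
  then have "complex_of_real (Re (H $$ (0, 0))) = H $$ (0, 0)"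
    by (simp add: complex_eq_iff)
  then have "stab_combination 0 [(Re (H $$ (0, 0)), outer 1 (vec 1 (\<lambda>_. 1)))] H"
    using stab_state_zero by (simp add: stab_combination_def outer_def)
  then show ?thesis ..
qed

lemma exists_stab_combination:
  "hermitian_mat (2 ^ n) H \<Longrightarrow> \<exists>L. stab_combination n L H"
proof (induction n arbitrary: H)
  case 0
  then show ?case by (intro stab_combination_zero) simp
next
  case (Suc n)
  let ?d = "2 ^ n :: nat"
  have kron_part: "\<exists>L. stab_combination (Suc n) L (kron (outer 2 (qubit_ket k)) G)"
    "kron (outer 2 (qubit_ket k)) G \<in> carrier_mat (2 ^ Suc n) (2 ^ Suc n)"
    if G_herm: "hermitian_mat ?d G" for k G
  proof -
    have G: "G \<in> carrier_mat ?d ?d" using G_herm unfolding hermitian_mat_def by blast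
    obtain L where "stab_combination n L G" using Suc.IH[OF G_herm] ..
    then show "\<exists>L. stab_combination (Suc n) L (kron (outer 2 (qubit_ket k)) G)"
      using stab_combination_kron[OF _ G] by blast
    show "kron (outer 2 (qubit_ket k)) G \<in> carrier_mat (2 ^ Suc n) (2 ^ Suc n)"
      using kron_carrier_mat[OF outer_carrier_mat G] by simp
  qed
  have "hermitian_mat (2 * ?d) H" using Suc.prems by simp
  then obtain G0 G1 G2 G3 where herm: "hermitian_mat ?d G0" "hermitian_mat ?d G1"
      "hermitian_mat ?d G2" "hermitian_mat ?d G3"
    and H: "H = kron (outer 2 (qubit_ket Ket0)) G0 + kron (outer 2 (qubit_ket Ket1)) G1
      + kron (outer 2 (qubit_ket KetPlus)) G2 + kron (outer 2 (qubit_ket KetPlusI)) G3"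
    by (rule hermitian_block_decomposition)
  obtain L0 L1 L2 L3 where
    "stab_combination (Suc n) L0 (kron (outer 2 (qubit_ket Ket0)) G0)"
    "stab_combination (Suc n) L1 (kron (outer 2 (qubit_ket Ket1)) G1)"
    "stab_combination (Suc n) L2 (kron (outer 2 (qubit_ket KetPlus)) G2)"
    "stab_combination (Suc n) L3 (kron (outer 2 (qubit_ket KetPlusI)) G3)"
    using kron_part(1)[OF herm(1)] kron_part(1)[OF herm(2)] kron_part(1)[OF herm(3)]
      kron_part(1)[OF herm(4)] by blast
  then have "stab_combination (Suc n) (((L0 @ L1) @ L2) @ L3) H"
    unfolding H using kron_part(2)[OF herm(1)] kron_part(2)[OF herm(2)] kron_part(2)[OF herm(3)]
      kron_part(2)[OF herm(4)]
    by (intro stab_combination_add add_carrier_mat) assumption+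
  then show ?case ..
qed

section \<open>Wigner functions of stabilizer states\<close>

lemma phase_point_carrier_mat: "phase_point qp \<in> carrier_mat 2 2"
  using pauli_carrier_mat by (simp add: phase_point_def split: prod.split)

lemma phase_op_carrier_mat: "phase_op \<alpha> \<in> carrier_mat (2 ^ length \<alpha>) (2 ^ length \<alpha>)"
proof -
  have "set (map phase_point \<alpha>) \<subseteq> carrier_mat 2 2" using phase_point_carrier_mat by auto
  then show ?thesis unfolding phase_op_def by (metis kron_list_carrier_mat length_map)
qed

lemma cmod_index_phase_point_le:
  assumes "i < 2" "j < 2"
  shows "cmod (phase_point qp $$ (i, j)) \<le> 2"
proof -
  obtain q p where qp: "qp = (q, p)" by (cases qp)
  have sg: "cmod (sg b) = 1" for b by (simp add: sg_def)
  have entry: "cmod (P $$ (i, j)) \<le> 1" if "P \<in> {1\<^sub>m 2, pauliX, pauliY, pauliZ}" for P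
    using that less_2_cases[OF assms(1)] less_2_cases[OF assms(2)] by (auto simp: pauli_defs)
  have "cmod (1\<^sub>m 2 $$ (i, j)) + cmod (sg p * pauliX $$ (i, j))
      + cmod ((sg q * sg p) * pauliY $$ (i, j)) + cmod (sg q * pauliZ $$ (i, j)) \<le> 4"
    using entry[of "1\<^sub>m 2"] entry[of pauliX] entry[of pauliY] entry[of pauliZ]
    by (simp add: norm_mult sg)
  then have "cmod (1\<^sub>m 2 $$ (i, j) + sg p * pauliX $$ (i, j) + (sg q * sg p) * pauliY $$ (i, j)
      + sg q * pauliZ $$ (i, j)) \<le> 4"
    by (smt (verit) norm_triangle_ineq)
  then show ?thesis
    using assms pauli_carrier_mat by (simp add: phase_point_def qp norm_mult)
qed

lemma cmod_index_kron_le: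
  assumes A: "\<forall>i<dim_row A. \<forall>j<dim_col A. cmod (A $$ (i, j)) \<le> a"
    and B: "\<forall>i<dim_row B. \<forall>j<dim_col B. cmod (B $$ (i, j)) \<le> b" and "0 \<le> a"
  shows "\<forall>i<dim_row (kron A B). \<forall>j<dim_col (kron A B). cmod (kron A B $$ (i, j)) \<le> a * b"
proof (intro allI impI)
  fix i j assume i: "i < dim_row (kron A B)" and j: "j < dim_col (kron A B)"
  then have "0 < dim_row B" "0 < dim_col B" by (auto intro: gr0I)
  moreover have "i div dim_row B < dim_row A" "j div dim_col B < dim_col A"
    using i j by (simp_all add: less_mult_imp_div_less)
  ultimately have "cmod (A $$ (i div dim_row B, j div dim_col B))
      * cmod (B $$ (i mod dim_row B, j mod dim_col B)) \<le> a * b"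
    using A B \<open>0 \<le> a\<close> by (intro mult_mono) auto
  then show "cmod (kron A B $$ (i, j)) \<le> a * b"
    using i j by (simp add: kron_def norm_mult)
qed

lemma cmod_index_phase_op_le:
  "\<forall>i<dim_row (phase_op \<alpha>). \<forall>j<dim_col (phase_op \<alpha>). cmod (phase_op \<alpha> $$ (i, j)) \<le> 2 ^ length \<alpha>"
  unfolding phase_op_def
proof (induction \<alpha>)
  case (Cons x xs)
  have "\<forall>i<dim_row (phase_point x). \<forall>j<dim_col (phase_point x). cmod (phase_point x $$ (i, j)) \<le> 2"
    using cmod_index_phase_point_le phase_point_carrier_mat[of x] by auto
  then show ?case using cmod_index_kron_le[OF _ Cons.IH] by simp
qed auto

lemma mtrace_mult:
  assumes A: "A \<in> carrier_mat d d" and B: "B \<in> carrier_mat d d"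
  shows "mtrace (A * B) = (\<Sum>r<d. \<Sum>s<d. A $$ (r, s) * B $$ (s, r))"
proof -
  have "mtrace (A * B) = (\<Sum>r<d. (A * B) $$ (r, r))" unfolding mtrace_def using A by simp
  also have "\<dots> = (\<Sum>r<d. \<Sum>s<d. A $$ (r, s) * B $$ (s, r))"
    by (rule sum.cong[OF refl], rule index_mult_mat_sum[OF A B]) auto
  finally show ?thesis .
qed

lemma wigner_linear:
  assumes R: "R \<in> carrier_mat (2 ^ n) (2 ^ n)" and S: "\<forall>i<k. \<sigma> i \<in> carrier_mat (2 ^ n) (2 ^ n)"
    and dec: "\<forall>r<2 ^ n. \<forall>s<2 ^ n. R $$ (r, s) = (\<Sum>i<k. complex_of_real (a i) * \<sigma> i $$ (r, s))"
    and "\<alpha> \<in> phase_space n"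
  shows "wigner n R \<alpha> = (\<Sum>i<k. a i * wigner n (\<sigma> i) \<alpha>)"
proof -
  let ?d = "2 ^ n :: nat"
  have A: "phase_op \<alpha> \<in> carrier_mat ?d ?d"
    using phase_op_carrier_mat[of \<alpha>] \<open>\<alpha> \<in> phase_space n\<close> by (simp add: phase_space_def)
  have "mtrace (R * phase_op \<alpha>)
      = (\<Sum>r<?d. \<Sum>s<?d. \<Sum>i<k. complex_of_real (a i) * (\<sigma> i $$ (r, s) * phase_op \<alpha> $$ (s, r)))"
    using dec by (simp add: mtrace_mult[OF R A] sum_distrib_right mult.assoc)
  also have "\<dots> = (\<Sum>i<k. complex_of_real (a i) * mtrace (\<sigma> i * phase_op \<alpha>))"
    using S by (simp add: mtrace_mult[OF _ A] sum_distrib_left sum.swap[of _ "{..<k}"])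
  finally show ?thesis
    unfolding wigner_def by (simp add: Re_sum sum_divide_distrib)
qed

lemma mtrace_stab_state: "stab_state n \<sigma> \<Longrightarrow> mtrace \<sigma> = 1"
proof -
  assume "stab_state n \<sigma>"
  then obtain \<psi> where norm: "(\<Sum>i<2 ^ n. (cmod (\<psi> $ i))\<^sup>2) = 1" and \<sigma>: "\<sigma> = outer (2 ^ n) \<psi>"
    unfolding stab_state_def by blast
  have "mtrace \<sigma> = complex_of_real (\<Sum>i<2 ^ n. (cmod (\<psi> $ i))\<^sup>2)"
    unfolding \<sigma> mtrace_def of_real_sum complex_norm_square by (simp add: outer_def)
  then show ?thesis using norm by simp
qed

lemma abs_wigner_stab_state_le:
  assumes "stab_state n \<sigma>" and "\<alpha> \<in> phase_space n"
  shows "\<bar>wigner n \<sigma> \<alpha>\<bar> \<le> 2 ^ n * 2 ^ n"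
proof -
  let ?d = "2 ^ n :: nat"
  obtain \<psi> where norm: "(\<Sum>i<?d. (cmod (\<psi> $ i))\<^sup>2) = 1" and \<sigma>: "\<sigma> = outer ?d \<psi>"
    using assms(1) unfolding stab_state_def by blast
  have A: "phase_op \<alpha> \<in> carrier_mat ?d ?d"
    using phase_op_carrier_mat[of \<alpha>] assms(2) by (simp add: phase_space_def)
  have \<psi>_le: "cmod (\<psi> $ i) \<le> 1" if "i < ?d" for i
  proof -
    have "(cmod (\<psi> $ i))\<^sup>2 \<le> 1"
      using member_le_sum[of i "{..<?d}" "\<lambda>i. (cmod (\<psi> $ i))\<^sup>2"] that norm by simp
    then show ?thesis by (simp add: power_le_one_iff abs_le_iff)
  qed
  have "cmod (\<sigma> $$ (r, s) * phase_op \<alpha> $$ (s, r)) \<le> 2 ^ n" if "r < ?d" "s < ?d" for r s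
  proof -
    have "cmod (phase_op \<alpha> $$ (s, r)) \<le> 2 ^ n"
      using cmod_index_phase_op_le[of \<alpha>] A that assms(2) by (auto simp: phase_space_def)
    moreover have "cmod (\<psi> $ r) * cmod (\<psi> $ s) \<le> 1"
      using \<psi>_le[OF that(1)] \<psi>_le[OF that(2)] by (intro mult_le_one) auto
    ultimately have "cmod (\<psi> $ r) * cmod (\<psi> $ s) * cmod (phase_op \<alpha> $$ (s, r)) \<le> 1 * 2 ^ n"
      by (intro mult_mono) auto
    then show ?thesis
      using that by (simp add: \<sigma> outer_def norm_mult)
  qed
  then have "cmod (mtrace (\<sigma> * phase_op \<alpha>)) \<le> (\<Sum>r<?d. \<Sum>s<?d. (2::real) ^ n)"
    unfolding mtrace_mult[OF outer_carrier_mat[of ?d \<psi>, folded \<sigma>] A]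
    by (intro order_trans[OF norm_sum sum_mono] order_trans[OF norm_sum sum_mono]) auto
  then have "\<bar>Re (mtrace (\<sigma> * phase_op \<alpha>))\<bar> \<le> 2 ^ n * 2 ^ n * 2 ^ n"
    using abs_Re_le_cmod order_trans by fastforce
  then show ?thesis unfolding wigner_def by (simp add: abs_div divide_le_eq)
qed

section \<open>The extent bound\<close>

lemma sum_abs_lin_comb_le:
  fixes b :: "nat \<Rightarrow> real" and w :: "nat \<Rightarrow> 'x \<Rightarrow> real"
  assumes w: "\<And>i. i < k \<Longrightarrow> (\<Sum>x\<in>X. \<bar>w i x\<bar>) \<le> M"
  shows "(\<Sum>x\<in>X. \<bar>\<Sum>i<k. b i * w i x\<bar>) \<le> M * (\<Sum>i<k. \<bar>b i\<bar>)"
proof -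
  have "(\<Sum>x\<in>X. \<bar>\<Sum>i<k. b i * w i x\<bar>) \<le> (\<Sum>x\<in>X. \<Sum>i<k. \<bar>b i\<bar> * \<bar>w i x\<bar>)"
    by (intro sum_mono order_trans[OF sum_abs]) (simp add: abs_mult)
  also have "\<dots> = (\<Sum>i<k. \<bar>b i\<bar> * (\<Sum>x\<in>X. \<bar>w i x\<bar>))"
    by (simp add: sum.swap[of _ X] sum_distrib_left)
  also have "\<dots> \<le> (\<Sum>i<k. \<bar>b i\<bar> * M)"
    using w by (intro sum_mono mult_left_mono) auto
  also have "\<dots> = M * (\<Sum>i<k. \<bar>b i\<bar>)"
    by (simp add: sum_distrib_left mult.commute)
  finally show ?thesis .
qed

lemma exists_convex_weights_l1_close:
  fixes a :: "nat \<Rightarrow> real" and w :: "nat \<Rightarrow> 'x \<Rightarrow> real"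
  assumes sum_a: "(\<Sum>i<k. a i) = 1" and w: "\<And>i. i < k \<Longrightarrow> (\<Sum>x\<in>X. \<bar>w i x\<bar>) \<le> M"
  obtains c where "\<forall>i<k. 0 \<le> c i" "(\<Sum>i<k. c i) = 1"
    "(\<Sum>x\<in>X. \<bar>(\<Sum>i<k. a i * w i x) - (\<Sum>i<k. c i * w i x)\<bar>) \<le> M * ((\<Sum>i<k. \<bar>a i\<bar>) - 1)"
proof -
  define pos where "pos i = max (a i) 0" for i
  define neg where "neg i = max (- a i) 0" for i
  define P where "P = (\<Sum>i<k. pos i)"
  define N where "N = (\<Sum>i<k. neg i)"
  have parts: "a i = pos i - neg i" "\<bar>a i\<bar> = pos i + neg i" "0 \<le> pos i" "0 \<le> neg i" for i
    by (auto simp: pos_def neg_def)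
  have "P - N = 1" using sum_a by (simp add: P_def N_def parts(1) sum_subtractf)
  moreover have "(\<Sum>i<k. \<bar>a i\<bar>) = P + N" by (simp add: P_def N_def parts(2) sum.distrib)
  moreover have "0 \<le> N" unfolding N_def by (rule sum_nonneg) (simp add: parts)
  ultimately have P: "1 \<le> P" and abs_sum: "(\<Sum>i<k. \<bar>a i\<bar>) - 1 = 2 * N" by auto
  define c where "c i = pos i / P" for i
  have "\<bar>a i - c i\<bar> \<le> pos i * (N / P) + neg i" for i
  proof (cases "0 \<le> a i")
    case True
    then have "a i - c i = a i * (N / P)"
      using P \<open>P - N = 1\<close> by (simp add: c_def pos_def field_simps)
    then show ?thesis
      using True \<open>0 \<le> N\<close> P by (simp add: pos_def neg_def)
  qed (simp add: c_def pos_def neg_def)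
  then have "(\<Sum>i<k. \<bar>a i - c i\<bar>) \<le> (\<Sum>i<k. pos i * (N / P) + neg i)"
    by (rule sum_mono)
  also have "\<dots> = (\<Sum>i<k. pos i) * (N / P) + (\<Sum>i<k. neg i)"
    by (simp add: sum.distrib sum_distrib_right sum_divide_distrib)
  also have "\<dots> = (\<Sum>i<k. \<bar>a i\<bar>) - 1"
    using P abs_sum by (simp flip: P_def N_def)
  finally have coeff_sum: "(\<Sum>i<k. \<bar>a i - c i\<bar>) \<le> (\<Sum>i<k. \<bar>a i\<bar>) - 1" .
  have "0 < k" using sum_a by (cases k) auto
  moreover have "0 \<le> (\<Sum>x\<in>X. \<bar>w 0 x\<bar>)" by (rule sum_nonneg) simp
  ultimately have "0 \<le> M" using w[of 0] by linarith
  have "(\<Sum>x\<in>X. \<bar>\<Sum>i<k. (a i - c i) * w i x\<bar>) \<le> M * (\<Sum>i<k. \<bar>a i - c i\<bar>)"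
    by (rule sum_abs_lin_comb_le[OF w])
  also have "\<dots> \<le> M * ((\<Sum>i<k. \<bar>a i\<bar>) - 1)"
    using coeff_sum \<open>0 \<le> M\<close> by (rule mult_left_mono)
  finally have "(\<Sum>x\<in>X. \<bar>\<Sum>i<k. (a i - c i) * w i x\<bar>) \<le> M * ((\<Sum>i<k. \<bar>a i\<bar>) - 1)" .
  moreover have "(\<Sum>i<k. c i) = 1"
    using P by (simp add: c_def P_def flip: sum_divide_distrib)
  ultimately show ?thesis
    using that[of c] P parts(3) by (simp add: c_def sum_subtractf left_diff_distrib)
qed

lemma l1_dist_nonneg: "0 \<le> l1_dist n f g"
  unfolding l1_dist_def by (rule sum_nonneg) simp

lemma l1_wigner_le_M_max:
  assumes "stab_state n \<sigma>"
  shows "l1_dist n (wigner n \<sigma>) (\<lambda>_. 0) \<le> M_max n"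
proof -
  have "bdd_above {l1_dist n (wigner n \<sigma>') (\<lambda>_. 0) | \<sigma>'. stab_state n \<sigma>'}"
  proof (rule bdd_aboveI)
    fix x assume "x \<in> {l1_dist n (wigner n \<sigma>') (\<lambda>_. 0) | \<sigma>'. stab_state n \<sigma>'}"
    then obtain \<sigma>' where \<sigma>': "stab_state n \<sigma>'" and x: "x = l1_dist n (wigner n \<sigma>') (\<lambda>_. 0)"
      by blast
    have "x = (\<Sum>\<alpha>\<in>phase_space n. \<bar>wigner n \<sigma>' \<alpha>\<bar>)" by (simp add: x l1_dist_def)
    also have "\<dots> \<le> real (card (phase_space n)) * (2 ^ n * 2 ^ n)"
      by (rule sum_bounded_above) (rule abs_wigner_stab_state_le[OF \<sigma>'])
    finally show "x \<le> real (card (phase_space n)) * (2 ^ n * 2 ^ n)" .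
  qed
  then show ?thesis
    unfolding M_max_def by (rule cSup_upper[rotated]) (use assms in blast)
qed

lemma M_max_nonneg: "0 \<le> M_max n"
proof -
  obtain \<sigma> where "stab_state n \<sigma>" using ex_stab_state by blast
  then show ?thesis
    using l1_wigner_le_M_max l1_dist_nonneg order_trans by blast
qed

lemma wigner_distance_le: "f \<in> W_free n \<Longrightarrow> wigner_distance n \<rho> \<le> l1_dist n (wigner n \<rho>) f"
  unfolding wigner_distance_def
proof (rule cInf_lower)
  show "bdd_below {l1_dist n (wigner n \<rho>) f | f. f \<in> W_free n}"
    using l1_dist_nonneg by (intro bdd_belowI[of _ 0]) blast
qed blast

lemma wigner_distance_nonneg: "0 \<le> wigner_distance n \<rho>"
proof -
  obtain \<sigma> where "stab_state n \<sigma>" using ex_stab_state by blast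
  then have "wigner n \<sigma> \<in> W_free n"
    unfolding W_free_def
    by (intro CollectI exI[of _ "1 :: nat"] exI[of _ "\<lambda>_. 1 :: real"] exI[of _ "\<lambda>_. \<sigma>"])
      (simp add: fun_eq_iff)
  then have "{l1_dist n (wigner n \<rho>) f | f. f \<in> W_free n} \<noteq> {}" by blast
  then show ?thesis
    unfolding wigner_distance_def using l1_dist_nonneg by (intro cInf_greatest) blast+
qed

lemma mtrace_stab_decomposition:
  assumes \<rho>: "\<rho> \<in> carrier_mat (2 ^ n) (2 ^ n)" and stab: "\<forall>i<k. stab_state n (\<sigma> i)"
    and dec: "\<forall>r<2 ^ n. \<forall>s<2 ^ n. \<rho> $$ (r, s) = (\<Sum>i<k. complex_of_real (a i) * \<sigma> i $$ (r, s))"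
  shows "mtrace \<rho> = complex_of_real (\<Sum>i<k. a i)"
proof -
  have "mtrace \<rho> = (\<Sum>i<k. complex_of_real (a i) * (\<Sum>r<2 ^ n. \<sigma> i $$ (r, r)))"
    using \<rho> dec by (simp add: mtrace_def sum_distrib_left sum.swap[of _ "{..<k}"])
  also have "\<dots> = (\<Sum>i<k. complex_of_real (a i) * mtrace (\<sigma> i))"
  proof (rule sum.cong[OF refl])
    fix i assume "i \<in> {..<k}"
    then have "dim_row (\<sigma> i) = 2 ^ n"
      using stab stab_state_carrier_mat carrier_matD(1) by blast
    then show "complex_of_real (a i) * (\<Sum>r<2 ^ n. \<sigma> i $$ (r, r))
        = complex_of_real (a i) * mtrace (\<sigma> i)"
      by (simp add: mtrace_def)
  qed
  also have "\<dots> = (\<Sum>i<k. complex_of_real (a i))"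
    using stab mtrace_stab_state by (intro sum.cong) auto
  finally show ?thesis by simp
qed

lemma stab_decomposition_coeff_sum:
  fixes k :: nat
  assumes \<rho>: "density_op n \<rho>" and stab: "\<forall>i<k. stab_state n (\<sigma> i)"
    and dec: "\<forall>r<2 ^ n. \<forall>s<2 ^ n. \<rho> $$ (r, s) = (\<Sum>i<k. complex_of_real (a i) * \<sigma> i $$ (r, s))"
  shows "(\<Sum>i<k. a i) = 1"
proof -
  have "\<rho> \<in> carrier_mat (2 ^ n) (2 ^ n)" and "mtrace \<rho> = 1"
    using \<rho> unfolding density_op_def by auto
  then have "complex_of_real (\<Sum>i<k. a i) = 1"
    using mtrace_stab_decomposition[OF _ stab dec] by simp
  then show ?thesis by (simp only: of_real_eq_1_iff)
qed

lemma wigner_distance_le_extent_excess: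
  fixes k :: nat
  assumes \<rho>: "density_op n \<rho>" and stab: "\<forall>i<k. stab_state n (\<sigma> i)"
    and dec: "\<forall>r<2 ^ n. \<forall>s<2 ^ n. \<rho> $$ (r, s) = (\<Sum>i<k. complex_of_real (a i) * \<sigma> i $$ (r, s))"
  shows "wigner_distance n \<rho> \<le> M_max n * ((\<Sum>i<k. \<bar>a i\<bar>) - 1)"
proof -
  have M: "(\<Sum>\<alpha>\<in>phase_space n. \<bar>wigner n (\<sigma> i) \<alpha>\<bar>) \<le> M_max n" if "i < k" for i
    using l1_wigner_le_M_max stab that by (simp add: l1_dist_def)
  obtain c where "\<forall>i<k. 0 \<le> c i" "(\<Sum>i<k. c i) = 1"
    and close: "(\<Sum>\<alpha>\<in>phase_space n. \<bar>(\<Sum>i<k. a i * wigner n (\<sigma> i) \<alpha>)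
      - (\<Sum>i<k. c i * wigner n (\<sigma> i) \<alpha>)\<bar>) \<le> M_max n * ((\<Sum>i<k. \<bar>a i\<bar>) - 1)"
    using exists_convex_weights_l1_close[where w = "\<lambda>i \<alpha>. wigner n (\<sigma> i) \<alpha>",
        OF stab_decomposition_coeff_sum[OF assms] M]
    by blast
  then have "(\<lambda>\<alpha>. \<Sum>i<k. c i * wigner n (\<sigma> i) \<alpha>) \<in> W_free n"
    using stab unfolding W_free_def by (intro CollectI exI[of _ k] exI[of _ c] exI[of _ \<sigma>]) simp
  then have "wigner_distance n \<rho> \<le> l1_dist n (wigner n \<rho>) (\<lambda>\<alpha>. \<Sum>i<k. c i * wigner n (\<sigma> i) \<alpha>)"
    by (rule wigner_distance_le)
  also have "\<dots> = (\<Sum>\<alpha>\<in>phase_space n. \<bar>(\<Sum>i<k. a i * wigner n (\<sigma> i) \<alpha>)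
      - (\<Sum>i<k. c i * wigner n (\<sigma> i) \<alpha>)\<bar>)"
  proof -
    have "\<rho> \<in> carrier_mat (2 ^ n) (2 ^ n)" using \<rho> unfolding density_op_def by blast
    moreover have "\<forall>i<k. \<sigma> i \<in> carrier_mat (2 ^ n) (2 ^ n)"
      using stab stab_state_carrier_mat by blast
    ultimately show ?thesis
      unfolding l1_dist_def by (intro sum.cong refl) (simp add: wigner_linear[OF _ _ dec])
  qed
  finally show ?thesis using close by linarith
qed

lemma stab_decomposition_lower_bound:
  fixes k :: nat
  assumes "density_op n \<rho>" and "\<forall>i<k. stab_state n (\<sigma> i)"
    and "\<forall>r<2 ^ n. \<forall>s<2 ^ n. \<rho> $$ (r, s) = (\<Sum>i<k. complex_of_real (a i) * \<sigma> i $$ (r, s))"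
  shows "1 + wigner_distance n \<rho> / M_max n \<le> (\<Sum>i<k. \<bar>a i\<bar>)"
proof (cases "M_max n = 0")
  case True
  then show ?thesis
    using stab_decomposition_coeff_sum[OF assms] sum_abs[of a "{..<k}"] by simp
next
  case False
  then have "0 < M_max n" using M_max_nonneg[of n] by linarith
  then have "wigner_distance n \<rho> / M_max n \<le> (\<Sum>i<k. \<bar>a i\<bar>) - 1"
    using wigner_distance_le_extent_excess[OF assms] by (simp add: pos_divide_le_eq mult.commute)
  then show ?thesis by linarith
qed

lemma density_op_stab_decomposition:
  assumes "density_op n \<rho>"
  obtains k :: nat and a :: "nat \<Rightarrow> real" and \<sigma> where "\<forall>i<k. stab_state n (\<sigma> i)"
    "\<forall>r<2 ^ n. \<forall>s<2 ^ n. \<rho> $$ (r, s) = (\<Sum>i<k. complex_of_real (a i) * \<sigma> i $$ (r, s))"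
proof -
  have "hermitian_mat (2 ^ n) \<rho>"
    using assms unfolding density_op_def hermitian_mat_def by blast
  then obtain L where L: "stab_combination n L \<rho>" using exists_stab_combination by blast
  then have "\<forall>i<length L. stab_state n (snd (L ! i))"
    using nth_mem unfolding stab_combination_def by blast
  moreover have "\<forall>r<2 ^ n. \<forall>s<2 ^ n.
      \<rho> $$ (r, s) = (\<Sum>i<length L. complex_of_real (fst (L ! i)) * snd (L ! i) $$ (r, s))"
    using L unfolding stab_combination_def by (simp add: sum_list_sum_nth atLeast0LessThan)
  ultimately show ?thesis by (rule that)
qed

theorem theorem3p3:
  fixes n :: nat and \<rho> :: "complex mat"
  assumes "density_op n \<rho>"
  shows "stab_extent n \<rho> \<ge> 1 + wigner_distance n \<rho> / M_max n
    \<and> (stab_extent n \<rho>)\<^sup>2 \<ge> (1 + wigner_distance n \<rho> / M_max n)\<^sup>2"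
proof -
  obtain k :: nat and a \<sigma> where "\<forall>i<k. stab_state n (\<sigma> i)"
    "\<forall>r<2 ^ n. \<forall>s<2 ^ n. \<rho> $$ (r, s) = (\<Sum>i<k. complex_of_real (a i) * \<sigma> i $$ (r, s))"
    using density_op_stab_decomposition[OF assms] by metis
  then have nonempty: "{(\<Sum>i<k. \<bar>a i\<bar>) | k (a :: nat \<Rightarrow> real) \<sigma>. (\<forall>i<k. stab_state n (\<sigma> i))
      \<and> (\<forall>r<2 ^ n. \<forall>s<2 ^ n. \<rho> $$ (r, s) = (\<Sum>i<k. complex_of_real (a i) * \<sigma> i $$ (r, s)))} \<noteq> {}"
    by blast
  have lower: "1 + wigner_distance n \<rho> / M_max n \<le> stab_extent n \<rho>"
    unfolding stab_extent_def
    by (rule cInf_greatest[OF nonempty]) (auto intro: stab_decomposition_lower_bound[OF assms])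
  moreover have "0 \<le> 1 + wigner_distance n \<rho> / M_max n"
    using wigner_distance_nonneg M_max_nonneg by simp
  ultimately show ?thesis
    using power_mono by blast
qed

end
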